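(* Assume the ranking mechanism is consistent and $H$ is fixed. Let $(K_n)_{n\ge1}$ be any sequence of CDFs and fix $t\in\mathbb R$. Put $\sigma_n^2=\mathbb V(K_n(t-X))$ and $\Delta_n=\sum_{r=1}^H\big(\mathbb E K_n(t-X_{[r]})-\mathbb E K_n(t-X)\big)^2$. Then $0\le \Delta_n/H\le\sigma_n^2$, and $$n\,\mathbb V\big(F_{n;jps}(t)\big)-\Big(\sigma_n^2-\frac{\Delta_n}{H}\Big)\longrightarrow 0\quad(n\to\infty).$$ Equivalently, since $n\mathbb V(F_{n;srs}(t))=\sigma_n^2$, one has $n\mathbb V(F_{n;jps}(t))=n\mathbb V(F_{n;srs}(t))(1-\delta_n)+o(1)$ with $\delta_n=\Delta_n/(H\sigma_n^2)\in[0,1]$ (when $\sigma_n^2>0$).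
   Context: Setting (judgment post stratification, JPS). Fix an integer set size $H\ge 2$ and a sample size $n\ge 1$. A JPS sample is a collection of $n$ i.i.d. pairs $(X_1,R_1),\dots,(X_n,R_n)$, where $R_i\in\{1,\dots,H\}$ with $P(R_i=r)=1/H$ for each $r$, and conditionally on $R_i=r$ the real random variable $X_i$ has CDF $F_{[r]}$; $X_{[r]}$ denotes a random variable with CDF $F_{[r]}$. Let $F$ be the population CDF and $X$ a random variable with CDF $F$. The ranking mechanism is called consistent if $F(t)=\frac1H\sum_{r=1}^H F_{[r]}(t)$ for all $t\in\mathbb R$ (so each $X_i$ has marginal CDF $F$). Define $I_{ir}=\mathbb I(R_i=r)$, $N_r=\sum_{i=1}^n I_{ir}$, $J_r=1/N_r$ if $N_r>0$ and $J_r=0$ otherwise, $d_n=\sum_{r=1}^H\mathbb I(N_r>0)$, and $W_r=\mathbb I(N_r>0)/d_n$. Given a CDF $K_n$ on $\mathbb R$, define $F_{n;[r]}(t)=\frac1{N_r}\sum_{i=1}^n K_n(t-X_i)I_{ir}$ if $N_r>0$ and $F_{n;[r]}(t)=0$ otherwise, and the JPS estimator $F_{n;jps}(t)=\sum_{r=1}^H W_rF_{n;[r]}(t)$. For an i.i.d. sample $X_1,\dots,X_n$ from $F$ (simple random sample, SRS), the SRS estimator is $F_{n;srs}(t)=\frac1n\sum_{i=1}^n K_n(t-X_i)$. *)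

theory Defs
  imports "HOL-Probability.Probability"
begin

definition is_CDF :: "(real \<Rightarrow> real) \<Rightarrow> bool" where
  "is_CDF G \<longleftrightarrow> mono G \<and> (\<forall>x. continuous (at_right x) G) \<and>
     (G \<longlongrightarrow> 0) at_bot \<and> (G \<longlongrightarrow> 1) at_top"

definition var :: "'a measure \<Rightarrow> ('a \<Rightarrow> real) \<Rightarrow> real" where
  "var M f = (\<integral>x. (f x - (\<integral>y. f y \<partial>M))\<^sup>2 \<partial>M)"

definition jps_pair_law :: "nat \<Rightarrow> (nat \<Rightarrow> real measure) \<Rightarrow> (nat \<times> real) measure" where
  "jps_pair_law H Mr = measure_pmf (pmf_of_set {1..H}) \<bind>
     (\<lambda>r. distr (Mr r) (count_space UNIV \<Otimes>\<^sub>M borel) (\<lambda>x. (r, x)))"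

text \<open>Law of a JPS sample of size n: the pairs (R_i, X_i), i < n, are i.i.d.;
  a sample point is w with w i = (R_i, X_i).\<close>
definition jps_sample :: "nat \<Rightarrow> (nat \<Rightarrow> real measure) \<Rightarrow> nat \<Rightarrow> (nat \<Rightarrow> nat \<times> real) measure" where
  "jps_sample H Mr n = PiM {0..<n} (\<lambda>_. jps_pair_law H Mr)"

definition Ncount :: "nat \<Rightarrow> (nat \<Rightarrow> nat \<times> real) \<Rightarrow> nat \<Rightarrow> nat" where
  "Ncount n w r = card {i. i < n \<and> fst (w i) = r}"

definition F_rank :: "nat \<Rightarrow> (real \<Rightarrow> real) \<Rightarrow> real \<Rightarrow> (nat \<Rightarrow> nat \<times> real) \<Rightarrow> nat \<Rightarrow> real" where
  "F_rank n Kn t w r =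
     (if Ncount n w r > 0
      then (\<Sum>i\<in>{i. i < n \<and> fst (w i) = r}. Kn (t - snd (w i))) / real (Ncount n w r)
      else 0)"

definition d_count :: "nat \<Rightarrow> nat \<Rightarrow> (nat \<Rightarrow> nat \<times> real) \<Rightarrow> nat" where
  "d_count H n w = card {r \<in> {1..H}. Ncount n w r > 0}"

definition F_jps :: "nat \<Rightarrow> nat \<Rightarrow> (real \<Rightarrow> real) \<Rightarrow> real \<Rightarrow> (nat \<Rightarrow> nat \<times> real) \<Rightarrow> real" where
  "F_jps H n Kn t w =
     (\<Sum>r = 1..H. (if Ncount n w r > 0 then 1 / real (d_count H n w) else 0) * F_rank n Kn t w r)"

end

theory Submission
  imports Defs
begin

text \<open>Condition on the vector of ranks. Given the ranks, \<open>F_jps\<close> is a weighted sum of independent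
  observations; its conditional mean is \<open>A = \<Sum>\<^sub>r \<mu>\<^sub>r / d\<^sub>n\<close> over the observed ranks and its
  conditional variance is \<open>\<Sum>\<^sub>r v\<^sub>r / (d\<^sub>n\<^sup>2 N\<^sub>r)\<close>, where \<open>\<mu>\<^sub>r\<close> and \<open>v\<^sub>r\<close> are the mean and
  variance of \<open>K\<^sub>n(t - X\<^sub>[\<^sub>r\<^sub>])\<close>. Except on an event of probability at most \<open>H (1 - 1/H)\<^sup>n\<close> every
  rank is observed, so that \<open>A\<close> is constant and \<open>d\<^sub>n = H\<close>; as \<open>N\<^sub>r\<close> is binomial with parameters
  \<open>n\<close> and \<open>1/H\<close>, \<open>n E[1/N\<^sub>r; N\<^sub>r > 0] \<rightarrow> H\<close>. Hence \<open>n V(F_jps) = \<Sum>\<^sub>r v\<^sub>r / H + o(1)\<close>, and by the law of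
  total variance for the mixture \<open>F = (1/H) \<Sum>\<^sub>r F\<^sub>[\<^sub>r\<^sub>]\<close> one has \<open>\<Sum>\<^sub>r v\<^sub>r / H = \<sigma>\<^sub>n\<^sup>2 - \<Delta>\<^sub>n / H\<close>.\<close>

section \<open>Inverse moments of the binomial distribution\<close>

lemma binomial_div_Suc:
  "real (n choose k) / (real k + 1) = real (Suc n choose Suc k) / (real n + 1)"
proof -
  have "real (Suc n) * real (n choose k) = real (Suc n choose Suc k) * real (Suc k)"
    by (metis Suc_times_binomial_eq of_nat_mult)
  then show ?thesis by (simp add: field_simps)
qed

lemma binomial_sum_div_Suc:
  fixes p :: real assumes p: "0 < p"
  shows "(\<Sum>k\<le>n. real (n choose k) * p ^ k * (1 - p) ^ (n - k) / (real k + 1))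
     = (1 - (1 - p) ^ Suc n) / ((real n + 1) * p)"
proof -
  have "(\<Sum>k\<le>n. real (n choose k) * p ^ k * (1 - p) ^ (n - k) / (real k + 1))
      = (\<Sum>k\<le>n. real (Suc n choose Suc k) * p ^ Suc k * (1 - p) ^ (Suc n - Suc k)) / ((real n + 1) * p)"
  proof -
    have "real (n choose k) * p ^ k * (1 - p) ^ (n - k) / (real k + 1)
        = real (Suc n choose Suc k) * p ^ Suc k * (1 - p) ^ (Suc n - Suc k) / ((real n + 1) * p)" for k
    proof -
      have "real (n choose k) * p ^ k * (1 - p) ^ (n - k) / (real k + 1)
          = real (n choose k) / (real k + 1) * (p ^ k * (1 - p) ^ (n - k))" by simp
      also have "\<dots> = real (Suc n choose Suc k) / (real n + 1) * (p ^ Suc k / p * (1 - p) ^ (n - k))"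
        using p by (simp only: binomial_div_Suc) simp
      finally show ?thesis by simp
    qed
    then show ?thesis by (simp add: sum_divide_distrib del: binomial_Suc_Suc)
  qed
  also have "(\<Sum>k\<le>n. real (Suc n choose Suc k) * p ^ Suc k * (1 - p) ^ (Suc n - Suc k))
      = (p + (1 - p)) ^ Suc n - (1 - p) ^ Suc n"
    unfolding binomial_ring[of p "1 - p" "Suc n"] sum.atMost_Suc_shift by simp
  finally show ?thesis by simp
qed

lemma binomial_sum_div_Suc_Suc_le:
  fixes p :: real assumes p: "0 < p" "p \<le> 1"
  shows "(\<Sum>k\<le>n. real (n choose k) * p ^ k * (1 - p) ^ (n - k) / ((real k + 1) * (real k + 2)))
     \<le> 1 / ((real n + 1) * (real n + 2) * p\<^sup>2)"
proof -
  define b where "b j = real (Suc (Suc n) choose j) * p ^ j * (1 - p) ^ (Suc (Suc n) - j)" for j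
  have b_nonneg: "0 \<le> b j" for j using p by (simp add: b_def)
  have coeff: "real (n choose k) / ((real k + 1) * (real k + 2))
      = real (Suc (Suc n) choose Suc (Suc k)) / ((real n + 1) * (real n + 2))" for k
  proof -
    have step: "real (Suc n choose Suc k) / (real k + 2) = real (Suc (Suc n) choose Suc (Suc k)) / (real n + 2)"
      using binomial_div_Suc[of "Suc n" "Suc k"] by (simp add: add.commute del: binomial_Suc_Suc)
    have "real (n choose k) / ((real k + 1) * (real k + 2)) = real (n choose k) / (real k + 1) / (real k + 2)"
      by simp
    also have "\<dots> = real (Suc n choose Suc k) / (real k + 2) / (real n + 1)"
      by (simp only: binomial_div_Suc divide_divide_eq_left mult.commute)
    also have "\<dots> = real (Suc (Suc n) choose Suc (Suc k)) / ((real n + 1) * (real n + 2))"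
      by (simp only: step divide_divide_eq_left mult.commute)
    finally show ?thesis .
  qed
  have "real (n choose k) * p ^ k * (1 - p) ^ (n - k) / ((real k + 1) * (real k + 2))
      = b (Suc (Suc k)) / ((real n + 1) * (real n + 2) * p\<^sup>2)" for k
  proof -
    have "real (n choose k) * p ^ k * (1 - p) ^ (n - k) / ((real k + 1) * (real k + 2))
        = real (n choose k) / ((real k + 1) * (real k + 2)) * (p ^ k * (1 - p) ^ (n - k))" by simp
    also have "\<dots> = real (Suc (Suc n) choose Suc (Suc k)) / ((real n + 1) * (real n + 2))
        * (p ^ Suc (Suc k) / p\<^sup>2 * (1 - p) ^ (n - k))"
      using p by (simp only: coeff) (simp add: power2_eq_square)
    finally show ?thesis by (simp add: b_def)
  qed
  then have "(\<Sum>k\<le>n. real (n choose k) * p ^ k * (1 - p) ^ (n - k) / ((real k + 1) * (real k + 2)))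
      = (\<Sum>k\<le>n. b (Suc (Suc k))) / ((real n + 1) * (real n + 2) * p\<^sup>2)"
    by (simp add: sum_divide_distrib del: binomial_Suc_Suc)
  also have "(\<Sum>k\<le>n. b (Suc (Suc k))) \<le> 1"
  proof -
    have "b 0 + (b 1 + (\<Sum>k\<le>n. b (Suc (Suc k)))) = (p + (1 - p)) ^ Suc (Suc n)"
      unfolding binomial_ring b_def sum.atMost_Suc_shift by simp
    then show ?thesis using b_nonneg[of 0] b_nonneg[of 1] by simp
  qed
  finally show ?thesis using p by (simp add: divide_right_mono)
qed

lemma inverse_nat_lower: "1 / (real k + 1) - (if k = 0 then 1 else 0) \<le> (if k = 0 then 0 else 1 / real k)"
  by (simp add: frac_le)

lemma inverse_nat_upper:
  "(if k = 0 then 0 else 1 / real k) \<le> 1 / (real k + 1) + 3 / ((real k + 1) * (real k + 2))"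
proof (cases "k = 0")
  case False
  then have "(real k + 1) * (real k + 2) \<le> real k * (real k + 5)" by (simp add: algebra_simps)
  then have "(real k + 5) / (real k * (real k + 5)) \<le> (real k + 5) / ((real k + 1) * (real k + 2))"
    by (intro frac_le) auto
  then have "1 / real k \<le> (real k + 5) / ((real k + 1) * (real k + 2))"
    using False by simp
  also have "\<dots> = ((real k + 2) + 3) / ((real k + 1) * (real k + 2))"
    by (simp add: add_ac)
  also have "\<dots> = (real k + 2) / ((real k + 1) * (real k + 2)) + 3 / ((real k + 1) * (real k + 2))"
    by (rule add_divide_distrib)
  also have "(real k + 2) / ((real k + 1) * (real k + 2)) = 1 / (real k + 1)"
    by simp
  finally show ?thesis using False by simp
qed simp

lemma binomial_inverse_moment_bounds:
  fixes p :: real and n :: nat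
  assumes p: "0 < p" "p \<le> 1"
  defines "E \<equiv> \<Sum>k\<le>n. real (n choose k) * p ^ k * (1 - p) ^ (n - k) * (if k = 0 then 0 else 1 / real k)"
  shows "(1 - (1 - p) ^ Suc n) / ((real n + 1) * p) - (1 - p) ^ n \<le> E"
    and "E \<le> (1 - (1 - p) ^ Suc n) / ((real n + 1) * p) + 3 / ((real n + 1) * (real n + 2) * p\<^sup>2)"
proof -
  define b where "b k = real (n choose k) * p ^ k * (1 - p) ^ (n - k)" for k
  have b_nonneg: "0 \<le> b k" for k using p by (simp add: b_def)
  have S1: "(\<Sum>k\<le>n. b k / (real k + 1)) = (1 - (1 - p) ^ Suc n) / ((real n + 1) * p)"
    unfolding b_def by (rule binomial_sum_div_Suc[OF p(1)])
  have "(\<Sum>k\<le>n. b k * (if k = 0 then 1 else 0)) = (1 - p) ^ n"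
    by (simp add: b_def if_distrib[of "\<lambda>x. _ * x"] cong: if_cong)
  then have "(1 - (1 - p) ^ Suc n) / ((real n + 1) * p) - (1 - p) ^ n
      = (\<Sum>k\<le>n. b k * (1 / (real k + 1) - (if k = 0 then 1 else 0)))"
    unfolding S1[symmetric] by (simp add: right_diff_distrib sum_subtractf)
  also have "\<dots> \<le> E"
    unfolding E_def b_def[symmetric] by (intro sum_mono mult_left_mono inverse_nat_lower b_nonneg)
  finally show "(1 - (1 - p) ^ Suc n) / ((real n + 1) * p) - (1 - p) ^ n \<le> E" .
  have "E \<le> (\<Sum>k\<le>n. b k * (1 / (real k + 1) + 3 / ((real k + 1) * (real k + 2))))"
    unfolding E_def b_def[symmetric] by (intro sum_mono mult_left_mono inverse_nat_upper b_nonneg)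
  also have "\<dots> = (\<Sum>k\<le>n. b k / (real k + 1)) + 3 * (\<Sum>k\<le>n. b k / ((real k + 1) * (real k + 2)))"
    unfolding sum_distrib_left sum.distrib[symmetric] by (intro sum.cong refl) (simp add: ring_distribs)
  also have "(\<Sum>k\<le>n. b k / ((real k + 1) * (real k + 2))) \<le> 1 / ((real n + 1) * (real n + 2) * p\<^sup>2)"
    unfolding b_def by (rule binomial_sum_div_Suc_Suc_le[OF p])
  finally show "E \<le> (1 - (1 - p) ^ Suc n) / ((real n + 1) * p) + 3 / ((real n + 1) * (real n + 2) * p\<^sup>2)"
    unfolding S1 by simp
qed

lemma n_div_Suc_Suc_le_inverse: "real n / ((real n + 1) * (real n + 2)) \<le> inverse (real n)"
proof (cases "n = 0")
  case False
  then have "real n / ((real n + 1) * (real n + 2)) \<le> real n / (real n * real n)"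
    by (intro frac_le) (auto intro: mult_mono)
  with False show ?thesis by (simp add: field_simps)
qed simp

lemma binomial_inverse_moment_limit:
  fixes p :: real assumes p: "0 < p" "p \<le> 1"
  shows "(\<lambda>n. real n * (\<Sum>k\<le>n. real (n choose k) * p ^ k * (1 - p) ^ (n - k) * (if k = 0 then 0 else 1 / real k)))
     \<longlonglongrightarrow> 1 / p"
proof -
  define S where "S n = (1 - (1 - p) ^ Suc n) / ((real n + 1) * p)" for n
  have lim_S: "(\<lambda>n. real n * S n) \<longlonglongrightarrow> 1 / p"
  proof -
    have "real n * S n = real n / real (Suc n) * (1 - (1 - p) * (1 - p) ^ n) / p" for n
      unfolding S_def using p by (simp add: field_simps)
    moreover have "(\<lambda>n. real n / real (Suc n) * (1 - (1 - p) * (1 - p) ^ n) / p) \<longlonglongrightarrow> 1 * (1 - (1 - p) * 0) / p"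
      using p by (intro tendsto_intros LIMSEQ_n_over_Suc_n LIMSEQ_power_zero) auto
    ultimately show ?thesis by simp
  qed
  have lim_lower: "(\<lambda>n. real n * S n - real n * (1 - p) ^ n) \<longlonglongrightarrow> 1 / p"
    using tendsto_diff[OF lim_S powser_times_n_limit_0[of "1 - p"]] p by simp
  have lim_upper: "(\<lambda>n. real n * S n + 3 / p\<^sup>2 * inverse (real n)) \<longlonglongrightarrow> 1 / p"
    using tendsto_add[OF lim_S tendsto_mult_right_zero[OF lim_inverse_n, of "3 / p\<^sup>2"]] by simp
  define E where "E n = (\<Sum>k\<le>n. real (n choose k) * p ^ k * (1 - p) ^ (n - k) * (if k = 0 then 0 else 1 / real k))" for n
  note bounds = binomial_inverse_moment_bounds[OF p, folded S_def E_def]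
  have "(\<lambda>n. real n * E n) \<longlonglongrightarrow> 1 / p"
  proof (rule tendsto_sandwich[OF _ _ lim_lower lim_upper])
    show "\<forall>\<^sub>F n in sequentially. real n * S n - real n * (1 - p) ^ n \<le> real n * E n"
    proof (intro always_eventually allI)
      fix n
      have "real n * (S n - (1 - p) ^ n) \<le> real n * E n" by (intro mult_left_mono bounds(1)) simp
      then show "real n * S n - real n * (1 - p) ^ n \<le> real n * E n" by (simp add: right_diff_distrib)
    qed
    show "\<forall>\<^sub>F n in sequentially. real n * E n \<le> real n * S n + 3 / p\<^sup>2 * inverse (real n)"
    proof (intro always_eventually allI)
      fix n
      have "real n * (3 / ((real n + 1) * (real n + 2) * p\<^sup>2)) \<le> 3 / p\<^sup>2 * inverse (real n)"
        using mult_left_mono[OF n_div_Suc_Suc_le_inverse, of "3 / p\<^sup>2" n] by (simp add: field_simps)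
      moreover have "real n * E n \<le> real n * (S n + 3 / ((real n + 1) * (real n + 2) * p\<^sup>2))"
        by (intro mult_left_mono bounds(2)) simp
      ultimately show "real n * E n \<le> real n * S n + 3 / p\<^sup>2 * inverse (real n)"
        by (simp add: ring_distribs)
    qed
  qed
  then show ?thesis by (simp add: E_def)
qed

section \<open>Averages over finite sets\<close>

lemma abs_sum_diff_le_card_diff:
  fixes a b :: "'a \<Rightarrow> real"
  assumes U: "finite U" and C: "C \<subseteq> U"
    and a: "\<And>x. x \<in> U \<Longrightarrow> 0 \<le> a x \<and> a x \<le> 1" and b: "\<And>x. x \<in> U \<Longrightarrow> 0 \<le> b x \<and> b x \<le> 1"
    and eq: "\<And>x. x \<in> C \<Longrightarrow> a x = b x"
  shows "\<bar>(\<Sum>x\<in>U. a x) - (\<Sum>x\<in>U. b x)\<bar> \<le> real (card (U - C))"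
proof -
  have "(\<Sum>x\<in>U. a x) - (\<Sum>x\<in>U. b x) = (\<Sum>x\<in>U - C. a x - b x)"
    unfolding sum_subtractf[symmetric] using U C eq by (intro sum.mono_neutral_right) auto
  also have "\<bar>\<dots>\<bar> \<le> (\<Sum>x\<in>U - C. \<bar>a x - b x\<bar>)"
    by (rule sum_abs)
  also have "\<dots> \<le> (\<Sum>x\<in>U - C. 1)"
    using a b by (intro sum_mono) (fastforce simp: abs_le_iff)
  finally show ?thesis by simp
qed

lemma sum_square_diff_expand:
  fixes A :: "'a \<Rightarrow> real"
  shows "(\<Sum>x\<in>U. (A x - b)\<^sup>2) = (\<Sum>x\<in>U. (A x)\<^sup>2) - 2 * b * (\<Sum>x\<in>U. A x) + real (card U) * b\<^sup>2"
proof -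
  have "(\<Sum>x\<in>U. (A x - b)\<^sup>2) = (\<Sum>x\<in>U. (A x)\<^sup>2 - 2 * b * A x + b\<^sup>2)"
    by (intro sum.cong refl) (simp add: power2_diff)
  also have "\<dots> = (\<Sum>x\<in>U. (A x)\<^sup>2) - 2 * b * (\<Sum>x\<in>U. A x) + real (card U) * b\<^sup>2"
    by (simp add: sum.distrib sum_subtractf sum_distrib_left)
  finally show ?thesis .
qed

definition uniform_var :: "'a set \<Rightarrow> ('a \<Rightarrow> real) \<Rightarrow> real" where
  "uniform_var U A = (\<Sum>x\<in>U. (A x)\<^sup>2) / real (card U) - ((\<Sum>x\<in>U. A x) / real (card U))\<^sup>2"

lemma uniform_var_eq_sum_square_dev:
  assumes "finite U" "U \<noteq> {}"
  shows "uniform_var U A = (\<Sum>x\<in>U. (A x - m)\<^sup>2) / real (card U) - ((\<Sum>x\<in>U. A x) / real (card U) - m)\<^sup>2"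
  unfolding uniform_var_def sum_square_diff_expand using assms by (simp add: field_simps power2_eq_square)

lemma uniform_var_nonneg:
  assumes "finite U" "U \<noteq> {}"
  shows "0 \<le> uniform_var U A"
  using uniform_var_eq_sum_square_dev[OF assms, of A "(\<Sum>x\<in>U. A x) / real (card U)"]
  by (simp add: sum_nonneg)

lemma uniform_var_le_card_diff:
  assumes U: "finite U" "U \<noteq> {}" and C: "C \<subseteq> U"
    and A: "\<And>x. x \<in> U \<Longrightarrow> 0 \<le> A x \<and> A x \<le> 1"
    and A_const: "\<And>x. x \<in> C \<Longrightarrow> A x = m" and m: "0 \<le> m" "m \<le> 1"
  shows "uniform_var U A \<le> real (card (U - C)) / real (card U)"
proof -
  have "(\<Sum>x\<in>U. (A x - m)\<^sup>2) \<le> (\<Sum>x\<in>U. if x \<in> C then 0 else 1)"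
  proof (rule sum_mono)
    fix x assume x: "x \<in> U"
    have "\<bar>A x - m\<bar> \<le> 1" using A[OF x] m by linarith
    then show "(A x - m)\<^sup>2 \<le> (if x \<in> C then 0 else 1)"
      by (simp add: A_const abs_le_square_iff[of _ 1, simplified])
  qed
  also have "\<dots> = real (card (U - C))"
    using U(1) by (simp add: sum.If_cases Diff_eq)
  finally have "(\<Sum>x\<in>U. (A x - m)\<^sup>2) / real (card U) \<le> real (card (U - C)) / real (card U)"
    by (simp add: divide_right_mono)
  then show ?thesis
    using uniform_var_eq_sum_square_dev[OF U, of A m] by (smt (verit) zero_le_power2)
qed

section \<open>Rank vectors\<close>

definition rank_count :: "nat \<Rightarrow> (nat \<Rightarrow> nat) \<Rightarrow> nat \<Rightarrow> nat" where
  "rank_count n \<rho> r = card {i. i < n \<and> \<rho> i = r}"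

definition ranks_present :: "nat \<Rightarrow> nat \<Rightarrow> (nat \<Rightarrow> nat) \<Rightarrow> nat" where
  "ranks_present H n \<rho> = card {r \<in> {1..H}. 0 < rank_count n \<rho> r}"

definition jps_weight :: "nat \<Rightarrow> nat \<Rightarrow> (nat \<Rightarrow> nat) \<Rightarrow> nat \<Rightarrow> real" where
  "jps_weight H n \<rho> i =
     (if \<rho> i \<in> {1..H} then 1 / (real (ranks_present H n \<rho>) * real (rank_count n \<rho> (\<rho> i))) else 0)"

definition jps_stat :: "nat \<Rightarrow> (real \<Rightarrow> real) \<Rightarrow> nat \<Rightarrow> (nat \<Rightarrow> nat \<times> real) \<Rightarrow> real" where
  "jps_stat H g n w = (\<Sum>i<n. jps_weight H n (\<lambda>i. fst (w i)) i * g (snd (w i)))"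

definition rank_vectors :: "nat \<Rightarrow> nat \<Rightarrow> (nat \<Rightarrow> nat) set" where
  "rank_vectors H n = PiE {..<n} (\<lambda>_. {1..H})"

definition covering_rank_vectors :: "nat \<Rightarrow> nat \<Rightarrow> (nat \<Rightarrow> nat) set" where
  "covering_rank_vectors H n = {\<rho> \<in> rank_vectors H n. \<forall>r\<in>{1..H}. 0 < rank_count n \<rho> r}"

definition cond_mean :: "nat \<Rightarrow> nat \<Rightarrow> (nat \<Rightarrow> real) \<Rightarrow> (nat \<Rightarrow> nat) \<Rightarrow> real" where
  "cond_mean H n \<mu> \<rho> = (\<Sum>r\<in>{1..H}. if 0 < rank_count n \<rho> r then \<mu> r / real (ranks_present H n \<rho>) else 0)"

definition cond_var_weight :: "nat \<Rightarrow> nat \<Rightarrow> nat \<Rightarrow> (nat \<Rightarrow> nat) \<Rightarrow> real" where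
  "cond_var_weight H n r \<rho> =
     (if 0 < rank_count n \<rho> r then 1 / ((real (ranks_present H n \<rho>))\<^sup>2 * real (rank_count n \<rho> r)) else 0)"

definition var_weight :: "nat \<Rightarrow> nat \<Rightarrow> nat \<Rightarrow> real" where
  "var_weight H n r = (\<Sum>\<rho>\<in>rank_vectors H n. cond_var_weight H n r \<rho>) / real H ^ n"

lemma rank_count_eq_0_iff: "rank_count n \<rho> r = 0 \<longleftrightarrow> (\<forall>i<n. \<rho> i \<noteq> r)"
  unfolding rank_count_def by auto

lemma rank_count_pos_iff: "0 < rank_count n \<rho> r \<longleftrightarrow> (\<exists>i<n. \<rho> i = r)"
  using rank_count_eq_0_iff[of n \<rho> r] by auto

lemma finite_rank_vectors: "finite (rank_vectors H n)"
  by (simp add: rank_vectors_def finite_PiE)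

lemma card_rank_vectors: "card (rank_vectors H n) = H ^ n"
  by (simp add: rank_vectors_def card_PiE)

lemma covering_rank_vectors_subset: "covering_rank_vectors H n \<subseteq> rank_vectors H n"
  by (auto simp: covering_rank_vectors_def)

lemma ranks_present_pos: "i < n \<Longrightarrow> \<rho> i \<in> {1..H} \<Longrightarrow> 0 < ranks_present H n \<rho>"
  unfolding ranks_present_def card_gt_0_iff by (auto simp: rank_count_pos_iff)

lemma ranks_present_covering: "\<rho> \<in> covering_rank_vectors H n \<Longrightarrow> ranks_present H n \<rho> = H"
  unfolding ranks_present_def covering_rank_vectors_def
  by (subgoal_tac "{r \<in> {1..H}. 0 < rank_count n \<rho> r} = {1..H}") (auto simp: rank_count_pos_iff)

lemma card_noncovering_le:
  "card (rank_vectors H n - covering_rank_vectors H n) \<le> H * (H - 1) ^ n"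
proof -
  have "rank_vectors H n - covering_rank_vectors H n \<subseteq> (\<Union>r\<in>{1..H}. PiE {..<n} (\<lambda>_. {1..H} - {r}))"
    by (auto simp: rank_vectors_def covering_rank_vectors_def rank_count_pos_iff PiE_iff)
  then have "card (rank_vectors H n - covering_rank_vectors H n)
      \<le> card (\<Union>r\<in>{1..H}. PiE {..<n} (\<lambda>_. {1..H} - {r}))"
    by (intro card_mono) (auto intro!: finite_PiE)
  also have "\<dots> \<le> (\<Sum>r\<in>{1..H}. card (PiE {..<n} (\<lambda>_. {1..H} - {r})))"
    by (rule card_UN_le) simp
  also have "\<dots> = H * (H - 1) ^ n"
    by (simp add: card_PiE)
  finally show ?thesis .
qed

lemma noncovering_fraction_limit:
  assumes "H \<ge> 1"
  shows "(\<lambda>n. real n * (real (card (rank_vectors H n - covering_rank_vectors H n)) / real H ^ n)) \<longlonglongrightarrow> 0"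
proof (rule Lim_null_comparison)
  have "norm ((real H - 1) / real H) < 1" using assms by simp
  then have "(\<lambda>n. real H * (real n * ((real H - 1) / real H) ^ n)) \<longlonglongrightarrow> real H * 0"
    by (intro tendsto_intros powser_times_n_limit_0)
  then show "(\<lambda>n. real n * (real H * (real H - 1) ^ n / real H ^ n)) \<longlonglongrightarrow> 0"
    by (simp add: power_divide ac_simps)
  have "real (card (rank_vectors H n - covering_rank_vectors H n)) \<le> real H * (real H - 1) ^ n" for n
  proof -
    have "real (card (rank_vectors H n - covering_rank_vectors H n)) \<le> real (H * (H - 1) ^ n)"
      using card_noncovering_le by (simp only: of_nat_le_iff)
    then show ?thesis using assms by simp
  qed
  then show "\<forall>\<^sub>F n in sequentially. norm (real n * (real (card (rank_vectors H n - covering_rank_vectors H n)) / real H ^ n))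
      \<le> real n * (real H * (real H - 1) ^ n / real H ^ n)"
    by (intro always_eventually allI) (simp add: mult_left_mono divide_right_mono)
qed

lemma map_pmf_of_set_eq_bernoulli:
  assumes r: "r \<in> {1..H}"
  shows "map_pmf (\<lambda>x. x = r) (pmf_of_set {1..H}) = bernoulli_pmf (1 / real H)"
proof (rule pmf_eqI)
  fix b :: bool
  have "{1..H} \<inter> (\<lambda>x. x = r) -` {b} = (if b then {r} else {1..H} - {r})"
    using r by auto
  moreover have "card ({1..H} - {r}) = H - 1" using r by simp
  ultimately show "pmf (map_pmf (\<lambda>x. x = r) (pmf_of_set {1..H})) b = pmf (bernoulli_pmf (1 / real H)) b"
    using r by (auto simp: pmf_map measure_pmf_of_set field_simps)
qed

lemma rank_count_binomial:
  assumes r: "r \<in> {1..H}"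
  shows "map_pmf (\<lambda>\<rho>. rank_count n \<rho> r) (Pi_pmf {..<n} undefined (\<lambda>_. pmf_of_set {1..H}))
    = binomial_pmf n (1 / real H)"
proof -
  let ?R = "Pi_pmf {..<n} undefined (\<lambda>_. pmf_of_set {1..H})"
  have indicators: "map_pmf (\<lambda>\<rho>. (\<lambda>x. x = r) \<circ> \<rho>) ?R
      = Pi_pmf {..<n} (undefined = r) (\<lambda>_. bernoulli_pmf (1 / real H))"
    unfolding map_pmf_of_set_eq_bernoulli[OF r, symmetric] by (rule Pi_pmf_map[symmetric]) auto
  have "rank_count n \<rho> r = card {i \<in> {..<n}. ((\<lambda>x. x = r) \<circ> \<rho>) i}" for \<rho>
    unfolding rank_count_def by (rule arg_cong[where f=card]) auto
  then have "map_pmf (\<lambda>\<rho>. rank_count n \<rho> r) ?R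
      = map_pmf (\<lambda>b. card {i \<in> {..<n}. b i}) (map_pmf (\<lambda>\<rho>. (\<lambda>x. x = r) \<circ> \<rho>) ?R)"
    by (simp add: pmf.map_comp o_def)
  also have "\<dots> = binomial_pmf n (1 / real H)"
    unfolding indicators using r by (intro binomial_pmf_altdef'[symmetric]) auto
  finally show ?thesis .
qed

lemma sum_rank_vectors_rank_count:
  assumes r: "r \<in> {1..H}"
  shows "(\<Sum>\<rho>\<in>rank_vectors H n. f (rank_count n \<rho> r)) =
    real H ^ n * (\<Sum>k\<le>n. real (n choose k) * (1 / real H) ^ k * (1 - 1 / real H) ^ (n - k) * f k)"
proof -
  have H: "H \<ge> 1" using r by simp
  let ?R = "Pi_pmf {..<n} undefined (\<lambda>_. pmf_of_set {1..H})"
  have "?R = pmf_of_set (PiE_dflt {..<n} undefined (\<lambda>_. {1..H}))"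
    using H by (intro Pi_pmf_of_set) auto
  also have "PiE_dflt {..<n} undefined (\<lambda>_. {1..H}) = rank_vectors H n"
    by (auto simp: PiE_dflt_def rank_vectors_def PiE_def extensional_def)
  finally have R: "?R = pmf_of_set (rank_vectors H n)" .
  have "rank_vectors H n \<noteq> {}" using H by (simp add: rank_vectors_def PiE_eq_empty_iff)
  then have "(\<Sum>\<rho>\<in>rank_vectors H n. f (rank_count n \<rho> r)) / real H ^ n
      = measure_pmf.expectation (pmf_of_set (rank_vectors H n)) (\<lambda>\<rho>. f (rank_count n \<rho> r))"
    by (simp add: integral_pmf_of_set finite_rank_vectors card_rank_vectors)
  also have "\<dots> = measure_pmf.expectation (binomial_pmf n (1 / real H)) f"
    unfolding R[symmetric] rank_count_binomial[OF r, symmetric] by simp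
  also have "\<dots> = (\<Sum>k\<le>n. real (n choose k) * (1 / real H) ^ k * (1 - 1 / real H) ^ (n - k) * f k)"
    using H by (subst expectation_binomial_pmf') auto
  finally show ?thesis using H by (simp add: field_simps)
qed

lemma sum_group_by_rank:
  "(\<Sum>i<n. if \<rho> i \<in> {1..H} then f (\<rho> i) else 0) = (\<Sum>r\<in>{1..H}. real (rank_count n \<rho> r) * f r)"
proof -
  have "(\<Sum>i<n. if \<rho> i \<in> {1..H} then f (\<rho> i) else 0) = (\<Sum>i<n. \<Sum>r\<in>{1..H}. if \<rho> i = r then f r else 0)"
    by (intro sum.cong refl) simp
  also have "\<dots> = (\<Sum>r\<in>{1..H}. real (rank_count n \<rho> r) * f r)"
  proof -
    have "(\<Sum>i<n. if \<rho> i = r then f r else 0) = (\<Sum>i\<in>{i\<in>{..<n}. \<rho> i = r}. f r)" for r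
      by (rule sum.inter_filter[symmetric]) simp
    moreover have "{i\<in>{..<n}. \<rho> i = r} = {i. i < n \<and> \<rho> i = r}" for r by auto
    ultimately show ?thesis by (subst sum.swap) (simp add: rank_count_def)
  qed
  finally show ?thesis .
qed

lemma F_jps_eq_jps_stat: "F_jps H n K t = jps_stat H (\<lambda>x. K (t - x)) n"
proof
  fix w :: "nat \<Rightarrow> nat \<times> real"
  define \<rho> where "\<rho> = (\<lambda>i. fst (w i))"
  define g where "g i = K (t - snd (w i))" for i
  have N: "Ncount n w = rank_count n \<rho>" by (simp add: Ncount_def rank_count_def \<rho>_def fun_eq_iff)
  have d: "d_count H n w = ranks_present H n \<rho>" by (simp add: d_count_def ranks_present_def N)
  have rank_term: "(if Ncount n w r > 0 then 1 / real (d_count H n w) else 0) * F_rank n K t w r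
      = (\<Sum>i<n. if \<rho> i = r then g i / (real (ranks_present H n \<rho>) * real (rank_count n \<rho> r)) else 0)" for r
  proof -
    have "(\<Sum>i\<in>{i. i < n \<and> fst (w i) = r}. K (t - snd (w i))) = (\<Sum>i<n. if \<rho> i = r then g i else 0)"
      by (simp add: sum.If_cases \<rho>_def g_def lessThan_def Collect_conj_eq Int_commute)
    then show ?thesis
      by (auto simp: N d F_rank_def rank_count_eq_0_iff sum_divide_distrib if_distrib[where f="\<lambda>x. x / _"]
          ac_simps cong: if_cong)
  qed
  have "F_jps H n K t w
      = (\<Sum>i<n. \<Sum>r=1..H. if \<rho> i = r then g i / (real (ranks_present H n \<rho>) * real (rank_count n \<rho> r)) else 0)"
    unfolding F_jps_def rank_term by (rule sum.swap)
  also have "\<dots> = jps_stat H (\<lambda>x. K (t - x)) n w"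
    unfolding jps_stat_def by (intro sum.cong refl) (simp add: jps_weight_def \<rho>_def g_def)
  finally show "F_jps H n K t w = jps_stat H (\<lambda>x. K (t - x)) n w" .
qed

lemma sum_jps_weight: "(\<Sum>i<n. jps_weight H n \<rho> i * \<mu> (\<rho> i)) = cond_mean H n \<mu> \<rho>"
proof -
  have "(\<Sum>i<n. jps_weight H n \<rho> i * \<mu> (\<rho> i))
      = (\<Sum>r\<in>{1..H}. real (rank_count n \<rho> r) * (\<mu> r / (real (ranks_present H n \<rho>) * real (rank_count n \<rho> r))))"
    unfolding sum_group_by_rank[symmetric] by (intro sum.cong refl) (simp add: jps_weight_def)
  also have "\<dots> = cond_mean H n \<mu> \<rho>"
    unfolding cond_mean_def by (intro sum.cong refl) auto
  finally show ?thesis .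
qed

lemma sum_jps_weight_sq:
  "(\<Sum>i<n. (jps_weight H n \<rho> i)\<^sup>2 * v (\<rho> i)) = (\<Sum>r\<in>{1..H}. v r * cond_var_weight H n r \<rho>)"
proof -
  have "(\<Sum>i<n. (jps_weight H n \<rho> i)\<^sup>2 * v (\<rho> i))
      = (\<Sum>r\<in>{1..H}. real (rank_count n \<rho> r) * (v r / (real (ranks_present H n \<rho>) * real (rank_count n \<rho> r))\<^sup>2))"
    unfolding sum_group_by_rank[symmetric] by (intro sum.cong refl) (simp add: jps_weight_def power_divide)
  also have "\<dots> = (\<Sum>r\<in>{1..H}. v r * cond_var_weight H n r \<rho>)"
    unfolding cond_var_weight_def by (intro sum.cong refl) (auto simp: power2_eq_square)
  finally show ?thesis .
qed

lemma cond_mean_bounds: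
  assumes \<rho>: "\<rho> \<in> rank_vectors H n" and n: "n \<ge> 1"
    and \<mu>: "\<And>r. r \<in> {1..H} \<Longrightarrow> 0 \<le> \<mu> r \<and> \<mu> r \<le> 1"
  shows "0 \<le> cond_mean H n \<mu> \<rho> \<and> cond_mean H n \<mu> \<rho> \<le> 1"
proof
  show "0 \<le> cond_mean H n \<mu> \<rho>" unfolding cond_mean_def by (intro sum_nonneg) (auto simp: \<mu>)
  have d: "0 < ranks_present H n \<rho>"
    using \<rho> n by (intro ranks_present_pos[of 0]) (auto simp: rank_vectors_def PiE_iff)
  have "cond_mean H n \<mu> \<rho> \<le> (\<Sum>r\<in>{1..H}. if 0 < rank_count n \<rho> r then 1 / real (ranks_present H n \<rho>) else 0)"
    unfolding cond_mean_def by (intro sum_mono) (auto simp: \<mu> divide_right_mono)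
  also have "\<dots> = (\<Sum>r\<in>{r\<in>{1..H}. 0 < rank_count n \<rho> r}. 1 / real (ranks_present H n \<rho>))"
    by (rule sum.inter_filter[symmetric]) simp
  also have "\<dots> = real (ranks_present H n \<rho>) * (1 / real (ranks_present H n \<rho>))"
    by (simp add: ranks_present_def)
  also have "\<dots> = 1" using d by simp
  finally show "cond_mean H n \<mu> \<rho> \<le> 1" .
qed

lemma cond_mean_covering:
  "\<rho> \<in> covering_rank_vectors H n \<Longrightarrow> cond_mean H n \<mu> \<rho> = (\<Sum>r\<in>{1..H}. \<mu> r) / real H"
  by (auto simp: cond_mean_def ranks_present_covering sum_divide_distrib covering_rank_vectors_def
      intro!: sum.cong)

lemma cond_var_weight_bounds:
  assumes \<rho>: "\<rho> \<in> rank_vectors H n" and n: "n \<ge> 1"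
  shows "0 \<le> cond_var_weight H n r \<rho> \<and> cond_var_weight H n r \<rho> \<le> 1"
proof -
  have "0 < ranks_present H n \<rho>"
    using \<rho> n by (intro ranks_present_pos[of 0]) (auto simp: rank_vectors_def PiE_iff)
  then have "1 \<le> (ranks_present H n \<rho>)\<^sup>2 * rank_count n \<rho> r" if "0 < rank_count n \<rho> r"
    using that by (simp add: Suc_le_eq)
  then have "1 \<le> (real (ranks_present H n \<rho>))\<^sup>2 * real (rank_count n \<rho> r)" if "0 < rank_count n \<rho> r"
    using that by (metis of_nat_1 of_nat_le_iff of_nat_mult of_nat_power)
  then show ?thesis by (auto simp: cond_var_weight_def divide_le_eq_1)
qed

lemma cond_var_weight_covering:
  "\<rho> \<in> covering_rank_vectors H n \<Longrightarrow>
    cond_var_weight H n r \<rho> = (if 0 < rank_count n \<rho> r then 1 / ((real H)\<^sup>2 * real (rank_count n \<rho> r)) else 0)"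
  by (simp add: cond_var_weight_def ranks_present_covering)

lemma sum_rank_vectors_inverse_count:
  assumes r: "r \<in> {1..H}"
  shows "(\<Sum>\<rho>\<in>rank_vectors H n. if 0 < rank_count n \<rho> r then 1 / ((real H)\<^sup>2 * real (rank_count n \<rho> r)) else 0)
      / real H ^ n
    = (\<Sum>k\<le>n. real (n choose k) * (1 / real H) ^ k * (1 - 1 / real H) ^ (n - k)
        * (if k = 0 then 0 else 1 / real k)) / (real H)\<^sup>2"
proof -
  have "(if 0 < k then 1 / ((real H)\<^sup>2 * real k) else 0) = (if k = 0 then 0 else 1 / real k) / (real H)\<^sup>2" for k
    by simp
  then show ?thesis
    using r sum_rank_vectors_rank_count[OF r, of "\<lambda>k. if 0 < k then 1 / ((real H)\<^sup>2 * real k) else 0" n]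
    by (simp add: sum_divide_distrib)
qed

lemma var_weight_approx:
  assumes r: "r \<in> {1..H}" and n: "n \<ge> 1"
  shows "\<bar>var_weight H n r - (\<Sum>k\<le>n. real (n choose k) * (1 / real H) ^ k * (1 - 1 / real H) ^ (n - k)
            * (if k = 0 then 0 else 1 / real k)) / (real H)\<^sup>2\<bar>
     \<le> real (card (rank_vectors H n - covering_rank_vectors H n)) / real H ^ n"
proof -
  define e where "e \<rho> = (if 0 < rank_count n \<rho> r then 1 / ((real H)\<^sup>2 * real (rank_count n \<rho> r)) else 0)" for \<rho>
  have e_bounds: "0 \<le> e \<rho> \<and> e \<rho> \<le> 1" for \<rho>
  proof -
    have "1 \<le> H\<^sup>2 * rank_count n \<rho> r" if "0 < rank_count n \<rho> r"
      using that r by (simp add: Suc_le_eq)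
    then have "1 \<le> (real H)\<^sup>2 * real (rank_count n \<rho> r)" if "0 < rank_count n \<rho> r"
      using that by (metis of_nat_1 of_nat_le_iff of_nat_mult of_nat_power)
    then show ?thesis by (auto simp: e_def divide_le_eq_1)
  qed
  have "\<bar>(\<Sum>\<rho>\<in>rank_vectors H n. cond_var_weight H n r \<rho>) - (\<Sum>\<rho>\<in>rank_vectors H n. e \<rho>)\<bar>
      \<le> real (card (rank_vectors H n - covering_rank_vectors H n))"
    using cond_var_weight_bounds[OF _ n] e_bounds
    by (intro abs_sum_diff_le_card_diff finite_rank_vectors covering_rank_vectors_subset)
      (auto simp: cond_var_weight_covering e_def)
  then show ?thesis
    unfolding sum_rank_vectors_inverse_count[OF r, symmetric] e_def[symmetric]
    by (simp add: var_weight_def divide_right_mono flip: diff_divide_distrib)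
qed

lemma var_weight_limit:
  assumes r: "r \<in> {1..H}"
  shows "(\<lambda>n. real n * var_weight H n r) \<longlonglongrightarrow> 1 / real H"
proof -
  have H: "H \<ge> 1" using r by simp
  define B where "B n = (\<Sum>k\<le>n. real (n choose k) * (1 / real H) ^ k * (1 - 1 / real H) ^ (n - k)
            * (if k = 0 then 0 else 1 / real k))" for n
  have "(\<lambda>n. real n * B n / (real H)\<^sup>2) \<longlonglongrightarrow> 1 / (1 / real H) / (real H)\<^sup>2"
    unfolding B_def using H by (intro tendsto_divide tendsto_const binomial_inverse_moment_limit) auto
  then have lim_B: "(\<lambda>n. real n * (B n / (real H)\<^sup>2)) \<longlonglongrightarrow> 1 / real H"
    using H by (simp add: power2_eq_square)
  have "(\<lambda>n. real n * var_weight H n r - real n * (B n / (real H)\<^sup>2)) \<longlonglongrightarrow> 0"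
  proof (rule Lim_null_comparison[OF _ noncovering_fraction_limit[OF H]])
    show "\<forall>\<^sub>F n in sequentially. norm (real n * var_weight H n r - real n * (B n / (real H)\<^sup>2))
        \<le> real n * (real (card (rank_vectors H n - covering_rank_vectors H n)) / real H ^ n)"
    proof (rule eventually_sequentiallyI[of 1])
      fix n :: nat assume n: "n \<ge> 1"
      have "norm (real n * var_weight H n r - real n * (B n / (real H)\<^sup>2))
          = \<bar>real n * (var_weight H n r - B n / (real H)\<^sup>2)\<bar>"
        by (simp only: real_norm_def right_diff_distrib)
      also have "\<dots> = real n * \<bar>var_weight H n r - B n / (real H)\<^sup>2\<bar>"
        by (simp add: abs_mult)
      also have "\<dots> \<le> real n * (real (card (rank_vectors H n - covering_rank_vectors H n)) / real H ^ n)"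
        using var_weight_approx[OF r n] unfolding B_def by (intro mult_left_mono) auto
      finally show "norm (real n * var_weight H n r - real n * (B n / (real H)\<^sup>2))
          \<le> real n * (real (card (rank_vectors H n - covering_rank_vectors H n)) / real H ^ n)" .
    qed
  qed
  from tendsto_add[OF this lim_B] show ?thesis by simp
qed

lemma uniform_var_cond_mean_bounds:
  assumes H: "H \<ge> 1" and n: "n \<ge> 1" and \<mu>: "\<And>r. r \<in> {1..H} \<Longrightarrow> 0 \<le> \<mu> r \<and> \<mu> r \<le> 1"
  shows "0 \<le> uniform_var (rank_vectors H n) (cond_mean H n \<mu>)"
    and "uniform_var (rank_vectors H n) (cond_mean H n \<mu>)
      \<le> real (card (rank_vectors H n - covering_rank_vectors H n)) / real H ^ n"
proof -
  have nonempty: "rank_vectors H n \<noteq> {}" using H by (simp add: rank_vectors_def PiE_eq_empty_iff)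
  show "0 \<le> uniform_var (rank_vectors H n) (cond_mean H n \<mu>)"
    by (rule uniform_var_nonneg[OF finite_rank_vectors nonempty])
  have "0 \<le> (\<Sum>r\<in>{1..H}. \<mu> r)" using \<mu> by (intro sum_nonneg) auto
  moreover have "(\<Sum>r\<in>{1..H}. \<mu> r) \<le> (\<Sum>r\<in>{1..H}. 1)" using \<mu> by (intro sum_mono) auto
  ultimately have "0 \<le> (\<Sum>r\<in>{1..H}. \<mu> r) / real H \<and> (\<Sum>r\<in>{1..H}. \<mu> r) / real H \<le> 1"
    using H by simp
  then show "uniform_var (rank_vectors H n) (cond_mean H n \<mu>)
      \<le> real (card (rank_vectors H n - covering_rank_vectors H n)) / real H ^ n"
    using uniform_var_le_card_diff[OF finite_rank_vectors nonempty covering_rank_vectors_subset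
        cond_mean_bounds[OF _ n \<mu>] cond_mean_covering]
    by (simp add: card_rank_vectors)
qed

lemma scaled_uniform_var_cond_mean_limit:
  assumes H: "H \<ge> 1" and \<mu>: "\<And>n r. n \<ge> 1 \<Longrightarrow> r \<in> {1..H} \<Longrightarrow> 0 \<le> \<mu> n r \<and> \<mu> n r \<le> 1"
  shows "(\<lambda>n. real n * uniform_var (rank_vectors H n) (cond_mean H n (\<mu> n))) \<longlonglongrightarrow> 0"
proof (rule Lim_null_comparison[OF _ noncovering_fraction_limit[OF H]])
  show "\<forall>\<^sub>F n in sequentially. norm (real n * uniform_var (rank_vectors H n) (cond_mean H n (\<mu> n)))
      \<le> real n * (real (card (rank_vectors H n - covering_rank_vectors H n)) / real H ^ n)"
  proof (rule eventually_sequentiallyI[of 1])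
    fix n :: nat assume n: "n \<ge> 1"
    note bounds = uniform_var_cond_mean_bounds[OF H n \<mu>[OF n]]
    then show "norm (real n * uniform_var (rank_vectors H n) (cond_mean H n (\<mu> n)))
        \<le> real n * (real (card (rank_vectors H n - covering_rank_vectors H n)) / real H ^ n)"
      by (simp only: real_norm_def abs_mult abs_of_nonneg of_nat_0_le_iff) (rule mult_left_mono; simp)
  qed
qed

lemma weighted_var_weight_limit:
  assumes v: "\<And>n r. n \<ge> 1 \<Longrightarrow> r \<in> {1..H} \<Longrightarrow> \<bar>v n r\<bar> \<le> 1"
  shows "(\<lambda>n. \<Sum>r\<in>{1..H}. v n r * (real n * var_weight H n r - 1 / real H)) \<longlonglongrightarrow> 0"
proof (rule tendsto_null_sum)
  fix r assume r: "r \<in> {1..H}"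
  have null: "(\<lambda>n. real n * var_weight H n r - 1 / real H) \<longlonglongrightarrow> 0"
    using var_weight_limit[OF r] by (rule LIM_zero)
  show "(\<lambda>n. v n r * (real n * var_weight H n r - 1 / real H)) \<longlonglongrightarrow> 0"
  proof (rule Lim_null_comparison[OF _ tendsto_rabs_zero[OF null]])
    show "\<forall>\<^sub>F n in sequentially. norm (v n r * (real n * var_weight H n r - 1 / real H))
        \<le> \<bar>real n * var_weight H n r - 1 / real H\<bar>"
      using v[OF _ r] by (intro eventually_sequentiallyI[of 1]) (simp add: abs_mult mult_left_le_one_le)
  qed
qed

section \<open>The pair law and the population law\<close>

lemma is_CDF_unit_interval:
  assumes "is_CDF G"
  shows "G \<in> borel_measurable borel" and "0 \<le> G x" and "G x \<le> 1"
proof -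
  have mono: "mono G" and lim0: "(G \<longlongrightarrow> 0) at_bot" and lim1: "(G \<longlongrightarrow> 1) at_top"
    using assms by (auto simp: is_CDF_def)
  show "G \<in> borel_measurable borel" by (rule borel_measurable_mono[OF mono])
  have "eventually (\<lambda>y. G y \<le> G x) at_bot"
    unfolding eventually_at_bot_linorder by (auto intro: monoD[OF mono])
  then show "0 \<le> G x" by (rule tendsto_upperbound[OF lim0 _ trivial_limit_at_bot_linorder])
  have "eventually (\<lambda>y. G x \<le> G y) at_top"
    unfolding eventually_at_top_linorder by (auto intro: monoD[OF mono])
  then show "G x \<le> 1" by (rule tendsto_lowerbound[OF lim1 _ trivial_limit_at_top_linorder])
qed

lemma var_nonneg: "0 \<le> var M f"
  by (simp add: var_def)

lemma is_CDF_reflect_unit_interval: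
  assumes "is_CDF G"
  shows "(\<lambda>x. G (t - x)) \<in> borel_measurable borel" and "0 \<le> G (t - x) \<and> G (t - x) \<le> 1"
proof -
  note G = is_CDF_unit_interval[OF assms]
  show "(\<lambda>x. G (t - x)) \<in> borel_measurable borel" using G(1) by measurable
  show "0 \<le> G (t - x) \<and> G (t - x) \<le> 1" using G(2,3) by blast
qed

lemma (in prob_space) integrable_unit_interval:
  fixes g :: "'a \<Rightarrow> real"
  shows "g \<in> borel_measurable M \<Longrightarrow> (\<And>x. 0 \<le> g x \<and> g x \<le> 1) \<Longrightarrow> integrable M g"
  by (rule integrable_const_bound[where B=1]) auto

lemma (in prob_space) integral_unit_interval:
  fixes g :: "'a \<Rightarrow> real"
  assumes g: "g \<in> borel_measurable M" and g_unit: "\<And>x. 0 \<le> g x \<and> g x \<le> 1"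
  shows "0 \<le> (\<integral>x. g x \<partial>M) \<and> (\<integral>x. g x \<partial>M) \<le> 1"
proof
  show "0 \<le> (\<integral>x. g x \<partial>M)" using g_unit by (simp add: integral_nonneg)
  have "(\<integral>x. g x \<partial>M) \<le> (\<integral>x. 1 \<partial>M)"
    using g g_unit by (intro integral_mono integrable_unit_interval) auto
  then show "(\<integral>x. g x \<partial>M) \<le> 1" by (simp add: prob_space)
qed

lemma (in prob_space) var_unit_interval:
  fixes g :: "'a \<Rightarrow> real"
  assumes g: "g \<in> borel_measurable M" and g_unit: "\<And>x. 0 \<le> g x \<and> g x \<le> 1"
  shows "var M g = (\<integral>x. (g x)\<^sup>2 \<partial>M) - (\<integral>x. g x \<partial>M)\<^sup>2" and "var M g \<le> 1"
proof -
  have g2_unit: "0 \<le> (g x)\<^sup>2 \<and> (g x)\<^sup>2 \<le> 1" for x using g_unit[of x] by (auto simp: power_le_one)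
  show var_eq: "var M g = (\<integral>x. (g x)\<^sup>2 \<partial>M) - (\<integral>x. g x \<partial>M)\<^sup>2"
    unfolding var_def using g g_unit g2_unit by (intro variance_eq integrable_unit_interval) auto
  have "(\<integral>x. (g x)\<^sup>2 \<partial>M) \<le> (\<integral>x. 1 \<partial>M)"
    using g g2_unit by (intro integral_mono integrable_unit_interval) auto
  then have "(\<integral>x. (g x)\<^sup>2 \<partial>M) \<le> 1" by (simp add: prob_space)
  then show "var M g \<le> 1" unfolding var_eq using zero_le_power2[of "\<integral>x. g x \<partial>M"] by linarith
qed

locale jps_design =
  fixes H :: nat and Mr :: "nat \<Rightarrow> real measure"
  assumes H_pos: "H \<ge> 1"
    and Mr_prob: "\<And>r. r \<in> {1..H} \<Longrightarrow> prob_space (Mr r)"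
    and Mr_sets: "\<And>r. r \<in> {1..H} \<Longrightarrow> sets (Mr r) = sets borel"
begin

abbreviation "Q \<equiv> jps_pair_law H Mr"

text \<open>Ranks outside \<open>{1..H}\<close> carry no mass; giving them the law \<open>Mr 1\<close> makes the kernel
  a measurable map into probability measures.\<close>

definition rank_law :: "nat \<Rightarrow> real measure" where
  "rank_law r = (if r \<in> {1..H} then Mr r else Mr 1)"

definition pair_kernel :: "nat \<Rightarrow> (nat \<times> real) measure" where
  "pair_kernel r = distr (rank_law r) (count_space UNIV \<Otimes>\<^sub>M borel) (\<lambda>x. (r, x))"

lemma prob_space_rank_law: "prob_space (rank_law r)" and sets_rank_law: "sets (rank_law r) = sets borel"
  using Mr_prob Mr_sets H_pos by (auto simp: rank_law_def)

lemma set_pmf_uniform_ranks: "set_pmf (pmf_of_set {1..H}) = {1..H}"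
  using H_pos by (subst set_pmf_of_set) auto

lemma jps_pair_law_eq_bind: "Q = measure_pmf (pmf_of_set {1..H}) \<bind> pair_kernel"
proof -
  let ?U = "measure_pmf (pmf_of_set {1..H})"
  let ?f = "\<lambda>r. distr (Mr r) (count_space UNIV \<Otimes>\<^sub>M borel) (\<lambda>x. (r, x))"
  have "subprob_algebra (?f r) = subprob_algebra (pair_kernel r)" for r
    by (rule subprob_algebra_cong) (simp add: pair_kernel_def)
  moreover have "distr ?U S ?f = distr ?U S pair_kernel" for S
  proof -
    have "?f -` A \<inter> set_pmf (pmf_of_set {1..H}) = pair_kernel -` A \<inter> set_pmf (pmf_of_set {1..H})" for A
      using set_pmf_uniform_ranks by (auto simp: pair_kernel_def rank_law_def)
    then have "emeasure ?U (?f -` A \<inter> space ?U) = emeasure ?U (pair_kernel -` A \<inter> space ?U)" for A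
      by (metis emeasure_Int_set_pmf space_measure_pmf Int_UNIV_right)
    then show ?thesis unfolding distr_def by simp
  qed
  ultimately show ?thesis unfolding jps_pair_law_def bind_def by simp
qed

lemma pair_kernel_measurable:
  "pair_kernel \<in> measurable (measure_pmf (pmf_of_set {1..H})) (subprob_algebra (count_space UNIV \<Otimes>\<^sub>M borel))"
proof -
  have "pair_kernel r \<in> space (subprob_algebra (count_space UNIV \<Otimes>\<^sub>M borel))" for r
  proof -
    have "(\<lambda>x. (r, x)) \<in> measurable (rank_law r) (count_space UNIV \<Otimes>\<^sub>M borel)"
      by (simp add: measurable_cong_sets[OF sets_rank_law refl])
    then have "prob_space (pair_kernel r)"
      unfolding pair_kernel_def by (rule prob_space.prob_space_distr[OF prob_space_rank_law])
    then show ?thesis by (auto simp: space_subprob_algebra pair_kernel_def prob_space_imp_subprob_space)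
  qed
  then show ?thesis by simp
qed

lemma sets_jps_pair_law: "sets Q = sets (count_space UNIV \<Otimes>\<^sub>M borel)"
  unfolding jps_pair_law_eq_bind by (rule sets_bind) (auto simp: pair_kernel_def)

lemma nn_integral_jps_pair_law:
  assumes f: "f \<in> borel_measurable (count_space UNIV \<Otimes>\<^sub>M borel)"
  shows "(\<integral>\<^sup>+p. f p \<partial>Q) = (\<Sum>r\<in>{1..H}. (\<integral>\<^sup>+x. f (r, x) \<partial>Mr r) * ennreal (1 / real H))"
proof -
  have "(\<integral>\<^sup>+p. f p \<partial>Q) = (\<integral>\<^sup>+r. \<integral>\<^sup>+p. f p \<partial>pair_kernel r \<partial>measure_pmf (pmf_of_set {1..H}))"
    unfolding jps_pair_law_eq_bind by (rule nn_integral_bind[OF f pair_kernel_measurable])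
  also have "\<dots> = (\<integral>\<^sup>+r. \<integral>\<^sup>+x. f (r, x) \<partial>rank_law r \<partial>measure_pmf (pmf_of_set {1..H}))"
  proof (rule nn_integral_cong)
    fix r
    have "(\<lambda>x. (r, x)) \<in> measurable (rank_law r) (count_space UNIV \<Otimes>\<^sub>M borel)"
      by (simp add: measurable_cong_sets[OF sets_rank_law refl])
    then show "(\<integral>\<^sup>+p. f p \<partial>pair_kernel r) = (\<integral>\<^sup>+x. f (r, x) \<partial>rank_law r)"
      unfolding pair_kernel_def by (rule nn_integral_distr) (use f in simp)
  qed
  also have "\<dots> = (\<Sum>r\<in>{1..H}. (\<integral>\<^sup>+x. f (r, x) \<partial>rank_law r) * pmf (pmf_of_set {1..H}) r)"
    using set_pmf_uniform_ranks by (subst nn_integral_measure_pmf_finite) auto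
  also have "\<dots> = (\<Sum>r\<in>{1..H}. (\<integral>\<^sup>+x. f (r, x) \<partial>Mr r) * ennreal (1 / real H))"
    using H_pos by (intro sum.cong refl) (auto simp: rank_law_def)
  finally show ?thesis .
qed

lemma prob_space_jps_pair_law: "prob_space Q"
proof (rule prob_spaceI)
  have "emeasure Q (space Q) = (\<Sum>r\<in>{1..H}. (\<integral>\<^sup>+x. 1 \<partial>Mr r) * ennreal (1 / real H))"
    using nn_integral_jps_pair_law[of "\<lambda>_. 1"] by simp
  also have "\<dots> = (\<Sum>r\<in>{1..H}. ennreal (1 / real H))"
    by (intro sum.cong refl) (simp add: prob_space.emeasure_space_1[OF Mr_prob])
  also have "\<dots> = ennreal (\<Sum>r\<in>{1..H}. 1 / real H)"
    by (rule sum_ennreal) simp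
  finally show "emeasure Q (space Q) = 1" using H_pos by simp
qed

lemma integral_jps_pair_law:
  assumes f: "f \<in> borel_measurable (count_space UNIV \<Otimes>\<^sub>M borel)" and f_unit: "\<And>p. 0 \<le> f p \<and> f p \<le> 1"
  shows "(\<integral>p. f p \<partial>Q) = (\<Sum>r\<in>{1..H}. \<integral>x. f (r, x) \<partial>Mr r) / real H"
proof -
  have integrable: "integrable (Mr r) (\<lambda>x. f (r, x))" if r: "r \<in> {1..H}" for r
  proof -
    have "(\<lambda>x. (r, x)) \<in> measurable (Mr r) (count_space UNIV \<Otimes>\<^sub>M borel)"
      by (simp add: measurable_cong_sets[OF Mr_sets[OF r] refl])
    from measurable_comp[OF this f] show ?thesis
      using f_unit by (intro prob_space.integrable_unit_interval[OF Mr_prob[OF r]]) (auto simp: o_def)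
  qed
  have "(\<integral>p. f p \<partial>Q) = enn2real (\<integral>\<^sup>+p. ennreal (f p) \<partial>Q)"
    using f f_unit by (intro integral_eq_nn_integral) (auto simp: measurable_cong_sets[OF sets_jps_pair_law refl])
  also have "(\<integral>\<^sup>+p. ennreal (f p) \<partial>Q) = (\<Sum>r\<in>{1..H}. (\<integral>\<^sup>+x. ennreal (f (r, x)) \<partial>Mr r) * ennreal (1 / real H))"
    using f by (intro nn_integral_jps_pair_law) simp
  also have "\<dots> = (\<Sum>r\<in>{1..H}. ennreal ((\<integral>x. f (r, x) \<partial>Mr r) * (1 / real H)))"
  proof (intro sum.cong refl)
    fix r assume r: "r \<in> {1..H}"
    have "(\<integral>\<^sup>+x. ennreal (f (r, x)) \<partial>Mr r) = ennreal (\<integral>x. f (r, x) \<partial>Mr r)"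
      using f_unit by (intro nn_integral_eq_integral integrable[OF r]) auto
    then show "(\<integral>\<^sup>+x. ennreal (f (r, x)) \<partial>Mr r) * ennreal (1 / real H) = ennreal ((\<integral>x. f (r, x) \<partial>Mr r) * (1 / real H))"
      using ennreal_mult''[of "1 / real H" "\<integral>x. f (r, x) \<partial>Mr r"] by simp
  qed
  also have "\<dots> = ennreal (\<Sum>r\<in>{1..H}. (\<integral>x. f (r, x) \<partial>Mr r) * (1 / real H))"
    using f_unit by (intro sum_ennreal) (simp add: integral_nonneg)
  finally show ?thesis
    using f_unit by (simp add: integral_nonneg sum_nonneg sum_divide_distrib)
qed


lemma
  fixes g :: "real \<Rightarrow> real"
  assumes r: "r \<in> {1..H}" and g: "g \<in> borel_measurable borel" and g_unit: "\<And>x. 0 \<le> g x \<and> g x \<le> 1"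
  shows var_rank_law_eq: "var (Mr r) g = (\<integral>x. (g x)\<^sup>2 \<partial>Mr r) - (\<integral>x. g x \<partial>Mr r)\<^sup>2"
    and var_rank_law_unit: "0 \<le> var (Mr r) g \<and> var (Mr r) g \<le> 1"
    and integral_rank_law_unit: "0 \<le> (\<integral>x. g x \<partial>Mr r) \<and> (\<integral>x. g x \<partial>Mr r) \<le> 1"
proof -
  interpret prob_space "Mr r" by (rule Mr_prob[OF r])
  have "g \<in> borel_measurable (Mr r)"
    using g by (simp add: measurable_cong_sets[OF Mr_sets[OF r] refl])
  then show "var (Mr r) g = (\<integral>x. (g x)\<^sup>2 \<partial>Mr r) - (\<integral>x. g x \<partial>Mr r)\<^sup>2"
    and "0 \<le> var (Mr r) g \<and> var (Mr r) g \<le> 1" and "0 \<le> (\<integral>x. g x \<partial>Mr r) \<and> (\<integral>x. g x \<partial>Mr r) \<le> 1"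
    using var_nonneg var_unit_interval integral_unit_interval g_unit by blast+
qed

lemma measurable_snd_jps_pair_law: "snd \<in> measurable Q borel"
  by (simp add: measurable_cong_sets[OF sets_jps_pair_law refl])

lemma population_eq_distr_snd:
  assumes P_prob: "prob_space P" and P_sets: "sets P = sets borel"
    and consistent: "\<And>s. measure P {..s} = (\<Sum>r = 1..H. measure (Mr r) {..s}) / real H"
  shows "P = distr Q borel snd"
proof -
  have "real_distribution P"
    using P_prob P_sets by (simp add: real_distribution_def real_distribution_axioms_def)
  moreover have "real_distribution (distr Q borel snd)"
    unfolding real_distribution_def real_distribution_axioms_def
    using prob_space.prob_space_distr[OF prob_space_jps_pair_law measurable_snd_jps_pair_law] by simp
  moreover have "cdf P s = cdf (distr Q borel snd) s" for s
  proof -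
    have "measure (distr Q borel snd) {..s} = measure Q (snd -` {..s} \<inter> space Q)"
      by (rule measure_distr[OF measurable_snd_jps_pair_law]) simp
    also have "\<dots> = (\<integral>p. indicator (snd -` {..s}) p \<partial>Q)"
      by (rule Bochner_Integration.integral_indicator[symmetric])
    also have "\<dots> = (\<integral>p. indicator {..s} (snd p) \<partial>Q)"
      by (intro Bochner_Integration.integral_cong refl) (simp add: indicator_def)
    also have "\<dots> = (\<Sum>r\<in>{1..H}. \<integral>x. indicator {..s} (snd (r, x)) \<partial>Mr r) / real H"
      by (rule integral_jps_pair_law) (simp_all add: indicator_def)
    also have "\<dots> = (\<Sum>r\<in>{1..H}. measure (Mr r) {..s}) / real H"
    proof (intro arg_cong2[where f="(/)"] sum.cong refl)
      fix r assume "r \<in> {1..H}"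
      then have "space (Mr r) = UNIV" using sets_eq_imp_space_eq[OF Mr_sets] by simp
      then show "(\<integral>x. indicator {..s} (snd (r, x)) \<partial>Mr r) = measure (Mr r) {..s}"
        by simp
    qed
    finally show ?thesis by (simp add: cdf_def consistent)
  qed
  ultimately show ?thesis using cdf_unique by blast
qed

lemma integral_distr_snd:
  fixes \<phi> :: "real \<Rightarrow> real"
  assumes \<phi>: "\<phi> \<in> borel_measurable borel" and \<phi>_unit: "\<And>x. 0 \<le> \<phi> x \<and> \<phi> x \<le> 1"
  shows "(\<integral>x. \<phi> x \<partial>distr Q borel snd) = (\<Sum>r\<in>{1..H}. \<integral>x. \<phi> x \<partial>Mr r) / real H"
proof -
  have "(\<integral>x. \<phi> x \<partial>distr Q borel snd) = (\<integral>p. \<phi> (snd p) \<partial>Q)"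
    by (rule integral_distr[OF measurable_snd_jps_pair_law \<phi>])
  also have "\<dots> = (\<Sum>r\<in>{1..H}. \<integral>x. \<phi> x \<partial>Mr r) / real H"
    using \<phi> \<phi>_unit by (subst integral_jps_pair_law) auto
  finally show ?thesis .
qed

text \<open>The law of total variance for the mixture of the rank laws.\<close>

lemma var_distr_snd_decomp:
  fixes g :: "real \<Rightarrow> real"
  assumes g: "g \<in> borel_measurable borel" and g_unit: "\<And>x. 0 \<le> g x \<and> g x \<le> 1"
  shows "var (distr Q borel snd) g - (\<Sum>r = 1..H. ((\<integral>x. g x \<partial>Mr r) - (\<integral>x. g x \<partial>distr Q borel snd))\<^sup>2) / real H
      = (\<Sum>r = 1..H. var (Mr r) g) / real H"
proof -
  interpret P: prob_space "distr Q borel snd"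
    by (rule prob_space.prob_space_distr[OF prob_space_jps_pair_law measurable_snd_jps_pair_law])
  define \<mu> where "\<mu> r = (\<integral>x. g x \<partial>Mr r)" for r
  define m where "m = (\<integral>x. g x \<partial>distr Q borel snd)"
  have g2_unit: "0 \<le> (g x)\<^sup>2 \<and> (g x)\<^sup>2 \<le> 1" for x using g_unit[of x] by (auto simp: power_le_one)
  have m: "m = (\<Sum>r\<in>{1..H}. \<mu> r) / real H"
    unfolding m_def \<mu>_def by (rule integral_distr_snd[OF g g_unit])
  have var_P: "var (distr Q borel snd) g = (\<Sum>r\<in>{1..H}. \<integral>x. (g x)\<^sup>2 \<partial>Mr r) / real H - m\<^sup>2"
  proof -
    have "var (distr Q borel snd) g = (\<integral>x. (g x)\<^sup>2 \<partial>distr Q borel snd) - m\<^sup>2"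
      unfolding m_def using g g_unit by (intro P.var_unit_interval(1)) auto
    also have "(\<integral>x. (g x)\<^sup>2 \<partial>distr Q borel snd) = (\<Sum>r\<in>{1..H}. \<integral>x. (g x)\<^sup>2 \<partial>Mr r) / real H"
      using g g2_unit by (intro integral_distr_snd) auto
    finally show ?thesis .
  qed
  have sum_dev: "(\<Sum>r\<in>{1..H}. (\<mu> r - m)\<^sup>2) = (\<Sum>r\<in>{1..H}. (\<mu> r)\<^sup>2) - real H * m\<^sup>2"
    using H_pos unfolding sum_square_diff_expand m by (simp add: power2_eq_square)
  have "(\<Sum>r = 1..H. var (Mr r) g) = (\<Sum>r\<in>{1..H}. \<integral>x. (g x)\<^sup>2 \<partial>Mr r) - (\<Sum>r\<in>{1..H}. (\<mu> r)\<^sup>2)"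
    unfolding \<mu>_def using g g_unit by (simp add: var_rank_law_eq sum_subtractf)
  then show ?thesis
    unfolding \<mu>_def[symmetric] m_def[symmetric] var_P sum_dev using H_pos
    by (simp add: diff_divide_distrib)
qed

end

section \<open>Conditioning on the ranks\<close>

text \<open>Ranks outside \<open>{1..H}\<close> occur only on a null set; clipping them to \<open>0\<close> lets every
  sample point select exactly one vector in the finite set \<open>PiE {..<n} (\<lambda>_. {0..H})\<close>,
  so no almost-everywhere reasoning is needed.\<close>

definition clip_rank :: "nat \<Rightarrow> nat \<Rightarrow> nat" where
  "clip_rank H a = (if a \<in> {1..H} then a else 0)"

definition observed_ranks :: "nat \<Rightarrow> nat \<Rightarrow> (nat \<Rightarrow> nat \<times> real) \<Rightarrow> nat \<Rightarrow> nat" where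
  "observed_ranks H n w = restrict (\<lambda>i. clip_rank H (fst (w i))) {..<n}"

definition rank_indicator :: "nat \<Rightarrow> nat \<Rightarrow> nat \<times> real \<Rightarrow> real" where
  "rank_indicator H a p = (if clip_rank H (fst p) = a then 1 else 0)"

lemma observed_ranks_PiE: "observed_ranks H n w \<in> PiE {..<n} (\<lambda>_. {0..H})"
  by (auto simp: observed_ranks_def clip_rank_def)

lemma jps_weight_observed_ranks:
  assumes i: "i < n"
  shows "jps_weight H n (observed_ranks H n w) i = jps_weight H n (\<lambda>i. fst (w i)) i"
proof -
  have "rank_count n (observed_ranks H n w) r = rank_count n (\<lambda>i. fst (w i)) r" if "r \<in> {1..H}" for r
    unfolding rank_count_def observed_ranks_def clip_rank_def using that by (intro arg_cong[where f=card]) auto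
  moreover from this have "ranks_present H n (observed_ranks H n w) = ranks_present H n (\<lambda>i. fst (w i))"
    unfolding ranks_present_def by (intro arg_cong[where f=card]) auto
  ultimately show ?thesis
    using i by (auto simp: jps_weight_def observed_ranks_def clip_rank_def)
qed

lemma prod_rank_indicator:
  assumes \<rho>: "\<rho> \<in> PiE {..<n} (\<lambda>_. {0..H})"
  shows "(\<Prod>k<n. rank_indicator H (\<rho> k) (w k)) = (if \<rho> = observed_ranks H n w then 1 else 0)"
proof (cases "\<rho> = observed_ranks H n w")
  case False
  then obtain k where "k < n" "\<rho> k \<noteq> clip_rank H (fst (w k))"
    using PiE_ext[OF \<rho> observed_ranks_PiE] by (auto simp: observed_ranks_def)
  then show ?thesis using False by (intro trans[OF prod_zero]) (auto simp: rank_indicator_def)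
qed (simp add: rank_indicator_def observed_ranks_def)

lemma sum_rank_indicator:
  "(\<Sum>\<rho>\<in>PiE {..<n} (\<lambda>_. {0..H}). (\<Prod>k<n. rank_indicator H (\<rho> k) (w k)) * Y \<rho>) = Y (observed_ranks H n w)"
proof -
  have "(\<Sum>\<rho>\<in>PiE {..<n} (\<lambda>_. {0..H}). (\<Prod>k<n. rank_indicator H (\<rho> k) (w k)) * Y \<rho>)
      = (\<Sum>\<rho>\<in>PiE {..<n} (\<lambda>_. {0..H}). if \<rho> = observed_ranks H n w then Y \<rho> else 0)"
    by (intro sum.cong refl) (simp add: prod_rank_indicator)
  then show ?thesis by (simp add: finite_PiE observed_ranks_PiE)
qed

lemma prod_rank_factors:
  assumes \<rho>: "\<rho> \<in> PiE {..<n} (\<lambda>_. {0..H})"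
  shows "(\<Prod>k<n. (if \<rho> k \<in> {1..H} then c k else 0) / real H)
     = (if \<rho> \<in> rank_vectors H n then (\<Prod>k<n. c k) / real H ^ n else 0)"
proof (cases "\<rho> \<in> rank_vectors H n")
  case True
  then have "\<forall>k<n. \<rho> k \<in> {1..H}" by (auto simp: rank_vectors_def PiE_iff)
  then show ?thesis using True by (simp add: prod_dividef)
next
  case False
  then obtain k where "k < n" "\<rho> k \<notin> {1..H}" using \<rho> by (auto simp: rank_vectors_def PiE_iff)
  then show ?thesis using False by (intro trans[OF prod_zero]) auto
qed

context jps_design
begin

abbreviation "sample n \<equiv> PiM {..<n} (\<lambda>_. Q)"

lemma jps_sample_eq_sample: "jps_sample H Mr n = sample n"
  by (simp add: jps_sample_def atLeast0LessThan)

lemma prob_space_sample: "prob_space (sample n)"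
  by (rule prob_space_PiM) (rule prob_space_jps_pair_law)

lemma integral_prod_components:
  fixes f :: "nat \<Rightarrow> nat \<times> real \<Rightarrow> real"
  assumes f: "\<And>k. f k \<in> borel_measurable (count_space UNIV \<Otimes>\<^sub>M borel)"
    and f_unit: "\<And>k p. 0 \<le> f k p \<and> f k p \<le> 1"
  shows "integrable (sample n) (\<lambda>w. \<Prod>k<n. f k (w k))"
    and "(\<integral>w. (\<Prod>k<n. f k (w k)) \<partial>sample n) = (\<Prod>k<n. \<integral>p. f k p \<partial>Q)"
proof -
  interpret Q: prob_space Q by (rule prob_space_jps_pair_law)
  interpret product_prob_space "\<lambda>_. Q" by (rule product_prob_spaceI) (rule prob_space_jps_pair_law)
  interpret S: prob_space "sample n" by (rule prob_space_sample)
  have fQ: "f k \<in> borel_measurable Q" for k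
    using f by (simp add: measurable_cong_sets[OF sets_jps_pair_law refl])
  have "(\<lambda>w. \<Prod>k<n. f k (w k)) \<in> borel_measurable (sample n)"
    using fQ by (intro borel_measurable_prod measurable_compose[OF measurable_component_singleton]) auto
  moreover have "0 \<le> (\<Prod>k<n. f k (w k)) \<and> (\<Prod>k<n. f k (w k)) \<le> 1" for w
    using f_unit by (simp add: prod_nonneg prod_le_1)
  ultimately show "integrable (sample n) (\<lambda>w. \<Prod>k<n. f k (w k))"
    by (rule S.integrable_unit_interval)
  show "(\<integral>w. (\<Prod>k<n. f k (w k)) \<partial>sample n) = (\<Prod>k<n. \<integral>p. f k p \<partial>Q)"
    using fQ f_unit by (intro product_integral_prod Q.integrable_unit_interval) auto
qed

lemma integral_rank_indicator:
  assumes \<phi>: "\<phi> \<in> borel_measurable borel" and \<phi>_unit: "\<And>x. 0 \<le> \<phi> x \<and> \<phi> x \<le> 1"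
  shows "(\<integral>p. rank_indicator H a p * \<phi> (snd p) \<partial>Q) = (if a \<in> {1..H} then \<integral>x. \<phi> x \<partial>Mr a else 0) / real H"
proof -
  have "(\<integral>p. rank_indicator H a p * \<phi> (snd p) \<partial>Q) = (\<Sum>r\<in>{1..H}. \<integral>x. rank_indicator H a (r, x) * \<phi> x \<partial>Mr r) / real H"
    using \<phi> \<phi>_unit by (subst integral_jps_pair_law) (auto simp: rank_indicator_def)
  also have "\<dots> = (\<Sum>r\<in>{1..H}. if r = a then \<integral>x. \<phi> x \<partial>Mr r else 0) / real H"
    by (intro arg_cong2[where f="(/)"] sum.cong refl) (auto simp: rank_indicator_def clip_rank_def)
  finally show ?thesis by simp
qed


lemma
  fixes \<phi> :: "nat \<Rightarrow> real \<Rightarrow> real"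
  assumes \<phi>: "\<And>k. \<phi> k \<in> borel_measurable borel" and \<phi>_unit: "\<And>k x. 0 \<le> \<phi> k x \<and> \<phi> k x \<le> 1"
  shows integrable_rank_indicator_prod:
      "integrable (sample n) (\<lambda>w. \<Prod>k<n. rank_indicator H (\<rho> k) (w k) * \<phi> k (snd (w k)))"
    and integral_rank_indicator_prod: "\<rho> \<in> PiE {..<n} (\<lambda>_. {0..H}) \<Longrightarrow>
      (\<integral>w. (\<Prod>k<n. rank_indicator H (\<rho> k) (w k) * \<phi> k (snd (w k))) \<partial>sample n)
      = (if \<rho> \<in> rank_vectors H n then (\<Prod>k<n. \<integral>x. \<phi> k x \<partial>Mr (\<rho> k)) / real H ^ n else 0)"
proof -
  have measurable: "(\<lambda>p. rank_indicator H (\<rho> k) p * \<phi> k (snd p)) \<in> borel_measurable (count_space UNIV \<Otimes>\<^sub>M borel)" for k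
    unfolding rank_indicator_def using \<phi> by measurable
  have unit: "0 \<le> rank_indicator H (\<rho> k) p * \<phi> k (snd p) \<and> rank_indicator H (\<rho> k) p * \<phi> k (snd p) \<le> 1" for k p
    using \<phi>_unit[of k "snd p"] by (simp add: rank_indicator_def)
  show "integrable (sample n) (\<lambda>w. \<Prod>k<n. rank_indicator H (\<rho> k) (w k) * \<phi> k (snd (w k)))"
    by (rule integral_prod_components(1)[OF measurable unit])
  assume \<rho>: "\<rho> \<in> PiE {..<n} (\<lambda>_. {0..H})"
  have "(\<integral>w. (\<Prod>k<n. rank_indicator H (\<rho> k) (w k) * \<phi> k (snd (w k))) \<partial>sample n)
      = (\<Prod>k<n. (if \<rho> k \<in> {1..H} then \<integral>x. \<phi> k x \<partial>Mr (\<rho> k) else 0) / real H)"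
    unfolding integral_prod_components(2)[OF measurable unit]
    by (intro prod.cong refl integral_rank_indicator \<phi> \<phi>_unit)
  then show "(\<integral>w. (\<Prod>k<n. rank_indicator H (\<rho> k) (w k) * \<phi> k (snd (w k))) \<partial>sample n)
      = (if \<rho> \<in> rank_vectors H n then (\<Prod>k<n. \<integral>x. \<phi> k x \<partial>Mr (\<rho> k)) / real H ^ n else 0)"
    by (simp only: prod_rank_factors[OF \<rho>])
qed

text \<open>The ranks are uniform on \<open>rank_vectors H n\<close>, and given ranks \<open>\<rho>\<close>
  the observations are independent with laws \<open>Mr (\<rho> k)\<close>.\<close>

lemma integral_cond_ranks:
  fixes c :: "(nat \<Rightarrow> nat) \<Rightarrow> 'j \<Rightarrow> real" and \<phi> :: "'j \<Rightarrow> nat \<Rightarrow> real \<Rightarrow> real"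
  assumes J: "finite J"
    and \<phi>: "\<And>j k. \<phi> j k \<in> borel_measurable borel" and \<phi>_unit: "\<And>j k x. 0 \<le> \<phi> j k x \<and> \<phi> j k x \<le> 1"
    and f: "\<And>w. f w = (\<Sum>j\<in>J. c (observed_ranks H n w) j * (\<Prod>k<n. \<phi> j k (snd (w k))))"
  shows "integrable (sample n) f"
    and "(\<integral>w. f w \<partial>sample n) = (\<Sum>\<rho>\<in>rank_vectors H n. \<Sum>j\<in>J. c \<rho> j * (\<Prod>k<n. \<integral>x. \<phi> j k x \<partial>Mr (\<rho> k))) / real H ^ n"
proof -
  let ?V = "PiE {..<n} (\<lambda>_. {0..H})"
  define piece where "piece \<rho> j w = (\<Prod>k<n. rank_indicator H (\<rho> k) (w k) * \<phi> j k (snd (w k)))" for \<rho> j w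
  have f_eq: "f = (\<lambda>w. \<Sum>\<rho>\<in>?V. \<Sum>j\<in>J. c \<rho> j * piece \<rho> j w)"
  proof
    fix w
    have "f w = (\<Sum>\<rho>\<in>?V. (\<Prod>k<n. rank_indicator H (\<rho> k) (w k)) * (\<Sum>j\<in>J. c \<rho> j * (\<Prod>k<n. \<phi> j k (snd (w k)))))"
      unfolding f sum_rank_indicator ..
    then show "f w = (\<Sum>\<rho>\<in>?V. \<Sum>j\<in>J. c \<rho> j * piece \<rho> j w)"
      by (simp add: piece_def prod.distrib sum_distrib_left ac_simps)
  qed
  have piece_integrable: "integrable (sample n) (piece \<rho> j)" for \<rho> j
    unfolding piece_def using \<phi> \<phi>_unit by (rule integrable_rank_indicator_prod)
  show "integrable (sample n) f"
    unfolding f_eq using piece_integrable by (intro Bochner_Integration.integrable_sum integrable_mult_right)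
  have "(\<integral>w. f w \<partial>sample n) = (\<Sum>\<rho>\<in>?V. \<Sum>j\<in>J. c \<rho> j * (\<integral>w. piece \<rho> j w \<partial>sample n))"
    unfolding f_eq using piece_integrable by simp
  also have "\<dots> = (\<Sum>\<rho>\<in>?V. if \<rho> \<in> rank_vectors H n
      then (\<Sum>j\<in>J. c \<rho> j * (\<Prod>k<n. \<integral>x. \<phi> j k x \<partial>Mr (\<rho> k))) / real H ^ n else 0)"
    unfolding piece_def using \<phi> \<phi>_unit
    by (intro sum.cong refl) (simp add: integral_rank_indicator_prod sum_divide_distrib)
  also have "\<dots> = (\<Sum>\<rho>\<in>rank_vectors H n. (\<Sum>j\<in>J. c \<rho> j * (\<Prod>k<n. \<integral>x. \<phi> j k x \<partial>Mr (\<rho> k))) / real H ^ n)"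
  proof -
    have "rank_vectors H n \<subseteq> ?V" unfolding rank_vectors_def by (rule PiE_mono) auto
    then show ?thesis by (simp add: sum.inter_restrict[symmetric] finite_PiE Int_absorb1)
  qed
  finally show "(\<integral>w. f w \<partial>sample n) = (\<Sum>\<rho>\<in>rank_vectors H n. \<Sum>j\<in>J. c \<rho> j * (\<Prod>k<n. \<integral>x. \<phi> j k x \<partial>Mr (\<rho> k))) / real H ^ n"
    by (simp add: sum_divide_distrib)
qed

end

section \<open>Variance of the JPS estimator\<close>

definition coord_factor :: "(real \<Rightarrow> real) \<Rightarrow> nat \<Rightarrow> nat \<Rightarrow> real \<Rightarrow> real" where
  "coord_factor g i k x = (if k = i then g x else 1)"

lemma prod_coord_factor: "i < n \<Longrightarrow> (\<Prod>k<n. coord_factor g i k (x k)) = g (x i)"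
  by (simp add: coord_factor_def)

lemma coord_factor_unit: "(\<And>x. 0 \<le> g x \<and> g x \<le> 1) \<Longrightarrow> 0 \<le> coord_factor g i k x \<and> coord_factor g i k x \<le> 1"
  by (simp add: coord_factor_def)

lemma coord_factor_measurable: "g \<in> borel_measurable borel \<Longrightarrow> coord_factor g i k \<in> borel_measurable borel"
  unfolding coord_factor_def by (cases "k = i") simp_all

definition pair_factor :: "(real \<Rightarrow> real) \<Rightarrow> nat \<times> nat \<Rightarrow> nat \<Rightarrow> real \<Rightarrow> real" where
  "pair_factor g ij k x = coord_factor g (fst ij) k x * coord_factor g (snd ij) k x"

lemma pair_factor_unit: "(\<And>x. 0 \<le> g x \<and> g x \<le> 1) \<Longrightarrow> 0 \<le> pair_factor g ij k x \<and> pair_factor g ij k x \<le> 1"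
  by (simp add: pair_factor_def coord_factor_def mult_le_one)

lemma pair_factor_measurable: "g \<in> borel_measurable borel \<Longrightarrow> pair_factor g ij k \<in> borel_measurable borel"
  unfolding pair_factor_def[abs_def] by (intro borel_measurable_times coord_factor_measurable)

lemma sum_sum_diagonal_split:
  fixes c s m :: "nat \<Rightarrow> real"
  shows "(\<Sum>i<n. \<Sum>j<n. c i * c j * (if i = j then s i else m i * m j))
    = (\<Sum>i<n. c i * m i)\<^sup>2 + (\<Sum>i<n. (c i)\<^sup>2 * (s i - (m i)\<^sup>2))"
proof -
  have "c i * c j * (if i = j then s i else m i * m j)
      = (c i * m i) * (c j * m j) + (if i = j then (c i)\<^sup>2 * (s i - (m i)\<^sup>2) else 0)" for i j
    by (cases "i = j") (simp_all add: algebra_simps power2_eq_square)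
  then show ?thesis
    by (simp add: sum.distrib power2_eq_square sum_product)
qed

context jps_design
begin

lemma prod_integral_coord_factor:
  assumes \<rho>: "\<rho> \<in> rank_vectors H n" and i: "i < n"
  shows "(\<Prod>k<n. \<integral>x. coord_factor g i k x \<partial>Mr (\<rho> k)) = (\<integral>x. g x \<partial>Mr (\<rho> i))"
proof -
  have "(\<Prod>k<n. \<integral>x. coord_factor g i k x \<partial>Mr (\<rho> k)) = (\<Prod>k<n. if k = i then \<integral>x. g x \<partial>Mr (\<rho> k) else 1)"
    using \<rho> by (intro prod.cong refl)
      (auto simp: coord_factor_def rank_vectors_def PiE_iff prob_space.prob_space[OF Mr_prob])
  then show ?thesis using i by simp
qed

lemma prod_integral_pair_factor:
  assumes \<rho>: "\<rho> \<in> rank_vectors H n" and i: "i < n" and j: "j < n"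
  shows "(\<Prod>k<n. \<integral>x. pair_factor g (i, j) k x \<partial>Mr (\<rho> k))
    = (if i = j then \<integral>x. (g x)\<^sup>2 \<partial>Mr (\<rho> i) else (\<integral>x. g x \<partial>Mr (\<rho> i)) * (\<integral>x. g x \<partial>Mr (\<rho> j)))"
proof (cases "i = j")
  case True
  then have "pair_factor g (i, j) k x = coord_factor (\<lambda>x. (g x)\<^sup>2) i k x" for k x
    by (simp add: pair_factor_def coord_factor_def power2_eq_square)
  then show ?thesis using True prod_integral_coord_factor[OF \<rho> i] by simp
next
  case False
  have "(\<integral>x. pair_factor g (i, j) k x \<partial>Mr (\<rho> k))
      = (\<integral>x. coord_factor g i k x \<partial>Mr (\<rho> k)) * (\<integral>x. coord_factor g j k x \<partial>Mr (\<rho> k))"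
    if "k \<in> {..<n}" for k
    using False that \<rho> prob_space.prob_space[OF Mr_prob, of "\<rho> k"]
    by (cases "k = i"; cases "k = j") (auto simp: pair_factor_def coord_factor_def rank_vectors_def PiE_iff)
  then have "(\<Prod>k<n. \<integral>x. pair_factor g (i, j) k x \<partial>Mr (\<rho> k))
      = (\<Prod>k<n. \<integral>x. coord_factor g i k x \<partial>Mr (\<rho> k)) * (\<Prod>k<n. \<integral>x. coord_factor g j k x \<partial>Mr (\<rho> k))"
    by (simp add: prod.distrib)
  then show ?thesis
    using False prod_integral_coord_factor[OF \<rho> i] prod_integral_coord_factor[OF \<rho> j] by simp
qed

lemma cond_second_moment:
  assumes g: "g \<in> borel_measurable borel" and g_unit: "\<And>x. 0 \<le> g x \<and> g x \<le> 1"
    and \<rho>: "\<rho> \<in> rank_vectors H n"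
  shows "(\<Sum>ij\<in>{..<n} \<times> {..<n}. jps_weight H n \<rho> (fst ij) * jps_weight H n \<rho> (snd ij)
        * (\<Prod>k<n. \<integral>x. pair_factor g ij k x \<partial>Mr (\<rho> k)))
    = (cond_mean H n (\<lambda>r. \<integral>x. g x \<partial>Mr r) \<rho>)\<^sup>2 + (\<Sum>r\<in>{1..H}. var (Mr r) g * cond_var_weight H n r \<rho>)"
proof -
  define \<mu> where "\<mu> = (\<lambda>r. \<integral>x. g x \<partial>Mr r)"
  define v where "v r = (\<integral>x. (g x)\<^sup>2 \<partial>Mr r) - (\<mu> r)\<^sup>2" for r
  have "(\<Sum>ij\<in>{..<n} \<times> {..<n}. jps_weight H n \<rho> (fst ij) * jps_weight H n \<rho> (snd ij)
        * (\<Prod>k<n. \<integral>x. pair_factor g ij k x \<partial>Mr (\<rho> k)))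
      = (\<Sum>i<n. \<Sum>j<n. jps_weight H n \<rho> i * jps_weight H n \<rho> j
        * (if i = j then \<integral>x. (g x)\<^sup>2 \<partial>Mr (\<rho> i) else \<mu> (\<rho> i) * \<mu> (\<rho> j)))"
    unfolding sum.cartesian_product' by (intro sum.cong refl) (simp add: prod_integral_pair_factor[OF \<rho>] \<mu>_def)
  also have "\<dots> = (cond_mean H n \<mu> \<rho>)\<^sup>2 + (\<Sum>r\<in>{1..H}. v r * cond_var_weight H n r \<rho>)"
    by (simp add: sum_sum_diagonal_split sum_jps_weight sum_jps_weight_sq flip: v_def)
  also have "(\<Sum>r\<in>{1..H}. v r * cond_var_weight H n r \<rho>) = (\<Sum>r\<in>{1..H}. var (Mr r) g * cond_var_weight H n r \<rho>)"
    unfolding v_def \<mu>_def using g g_unit by (simp add: var_rank_law_eq)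
  finally show ?thesis unfolding \<mu>_def .
qed

lemma jps_stat_eq_observed_ranks:
  "jps_stat H g n w = (\<Sum>i<n. jps_weight H n (observed_ranks H n w) i * (\<Prod>k<n. coord_factor g i k (snd (w k))))"
  by (simp add: jps_stat_def jps_weight_observed_ranks prod_coord_factor)

lemma
  fixes g :: "real \<Rightarrow> real"
  assumes g: "g \<in> borel_measurable borel" and g_unit: "\<And>x. 0 \<le> g x \<and> g x \<le> 1"
  shows integrable_jps_stat: "integrable (sample n) (jps_stat H g n)"
    and integral_jps_stat: "(\<integral>w. jps_stat H g n w \<partial>sample n)
      = (\<Sum>\<rho>\<in>rank_vectors H n. cond_mean H n (\<lambda>r. \<integral>x. g x \<partial>Mr r) \<rho>) / real H ^ n"
proof -
  note cond = integral_cond_ranks[where J="{..<n}" and c="jps_weight H n" and \<phi>="coord_factor g",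
      OF _ coord_factor_measurable[OF g] coord_factor_unit[OF g_unit] jps_stat_eq_observed_ranks]
  show "integrable (sample n) (jps_stat H g n)" using cond(1) by simp
  show "(\<integral>w. jps_stat H g n w \<partial>sample n)
      = (\<Sum>\<rho>\<in>rank_vectors H n. cond_mean H n (\<lambda>r. \<integral>x. g x \<partial>Mr r) \<rho>) / real H ^ n"
    unfolding cond(2)[OF finite_lessThan] sum_jps_weight[symmetric]
    by (intro arg_cong2[where f="(/)"] sum.cong refl) (simp add: prod_integral_coord_factor)
qed

lemma jps_stat_sq_eq_observed_ranks:
  "(jps_stat H g n w)\<^sup>2 = (\<Sum>ij\<in>{..<n} \<times> {..<n}.
     jps_weight H n (observed_ranks H n w) (fst ij) * jps_weight H n (observed_ranks H n w) (snd ij) *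
     (\<Prod>k<n. pair_factor g ij k (snd (w k))))"
  unfolding jps_stat_eq_observed_ranks power2_eq_square sum_product sum.cartesian_product'
  by (intro sum.cong refl) (simp add: pair_factor_def prod.distrib)

lemma
  fixes g :: "real \<Rightarrow> real"
  assumes g: "g \<in> borel_measurable borel" and g_unit: "\<And>x. 0 \<le> g x \<and> g x \<le> 1"
  shows integrable_jps_stat_sq: "integrable (sample n) (\<lambda>w. (jps_stat H g n w)\<^sup>2)"
    and integral_jps_stat_sq: "(\<integral>w. (jps_stat H g n w)\<^sup>2 \<partial>sample n)
      = (\<Sum>\<rho>\<in>rank_vectors H n. (cond_mean H n (\<lambda>r. \<integral>x. g x \<partial>Mr r) \<rho>)\<^sup>2
          + (\<Sum>r\<in>{1..H}. var (Mr r) g * cond_var_weight H n r \<rho>)) / real H ^ n"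
proof -
  note cond = integral_cond_ranks[where c="\<lambda>\<rho> ij. jps_weight H n \<rho> (fst ij) * jps_weight H n \<rho> (snd ij)",
      OF _ pair_factor_measurable[OF g] pair_factor_unit[OF g_unit] jps_stat_sq_eq_observed_ranks]
  show "integrable (sample n) (\<lambda>w. (jps_stat H g n w)\<^sup>2)"
    using cond(1) by simp
  show "(\<integral>w. (jps_stat H g n w)\<^sup>2 \<partial>sample n)
      = (\<Sum>\<rho>\<in>rank_vectors H n. (cond_mean H n (\<lambda>r. \<integral>x. g x \<partial>Mr r) \<rho>)\<^sup>2
          + (\<Sum>r\<in>{1..H}. var (Mr r) g * cond_var_weight H n r \<rho>)) / real H ^ n"
    unfolding cond(2)[OF finite_SigmaI[OF finite_lessThan finite_lessThan]]
    using g g_unit by (simp add: cond_second_moment cong: sum.cong)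
qed

lemma var_jps_stat:
  fixes g :: "real \<Rightarrow> real"
  assumes g: "g \<in> borel_measurable borel" and g_unit: "\<And>x. 0 \<le> g x \<and> g x \<le> 1"
  shows "var (sample n) (jps_stat H g n)
    = uniform_var (rank_vectors H n) (cond_mean H n (\<lambda>r. \<integral>x. g x \<partial>Mr r))
      + (\<Sum>r\<in>{1..H}. var (Mr r) g * var_weight H n r)"
proof -
  interpret S: prob_space "sample n" by (rule prob_space_sample)
  have "var (sample n) (jps_stat H g n)
      = (\<integral>w. (jps_stat H g n w)\<^sup>2 \<partial>sample n) - (\<integral>w. jps_stat H g n w \<partial>sample n)\<^sup>2"
    unfolding var_def using g g_unit by (intro S.variance_eq integrable_jps_stat integrable_jps_stat_sq)
  also have "\<dots> = uniform_var (rank_vectors H n) (cond_mean H n (\<lambda>r. \<integral>x. g x \<partial>Mr r))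
      + (\<Sum>\<rho>\<in>rank_vectors H n. \<Sum>r\<in>{1..H}. var (Mr r) g * cond_var_weight H n r \<rho>) / real H ^ n"
    using g g_unit
    by (simp add: integral_jps_stat integral_jps_stat_sq uniform_var_def card_rank_vectors sum.distrib
        add_divide_distrib)
  also have "(\<Sum>\<rho>\<in>rank_vectors H n. \<Sum>r\<in>{1..H}. var (Mr r) g * cond_var_weight H n r \<rho>) / real H ^ n
      = (\<Sum>r\<in>{1..H}. var (Mr r) g * var_weight H n r)"
    by (subst sum.swap) (simp add: var_weight_def sum_distrib_left sum_divide_distrib)
  finally show ?thesis .
qed

lemma var_jps_stat_asymptotics:
  fixes g :: "nat \<Rightarrow> real \<Rightarrow> real"
  assumes g: "\<And>n. n \<ge> 1 \<Longrightarrow> g n \<in> borel_measurable borel"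
    and g_unit: "\<And>n x. n \<ge> 1 \<Longrightarrow> 0 \<le> g n x \<and> g n x \<le> 1"
  shows "(\<lambda>n. real n * var (sample n) (jps_stat H (g n) n) - (\<Sum>r\<in>{1..H}. var (Mr r) (g n)) / real H)
    \<longlonglongrightarrow> 0"
proof -
  define A where "A n = uniform_var (rank_vectors H n) (cond_mean H n (\<lambda>r. \<integral>x. g n x \<partial>Mr r))" for n
  define B where "B n = (\<Sum>r\<in>{1..H}. var (Mr r) (g n) * (real n * var_weight H n r - 1 / real H))" for n
  have "(\<lambda>n. real n * A n) \<longlonglongrightarrow> 0"
    unfolding A_def using integral_rank_law_unit[OF _ g g_unit]
    by (intro scaled_uniform_var_cond_mean_limit H_pos) auto
  moreover have "B \<longlonglongrightarrow> 0"
    unfolding B_def using var_rank_law_unit[OF _ g g_unit]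
    by (intro weighted_var_weight_limit) (auto simp: abs_le_iff)
  ultimately have "(\<lambda>n. real n * A n + B n) \<longlonglongrightarrow> 0"
    using tendsto_add by fastforce
  moreover have "real n * var (sample n) (jps_stat H (g n) n) - (\<Sum>r\<in>{1..H}. var (Mr r) (g n)) / real H
      = real n * A n + B n" if "n \<ge> 1" for n
    using H_pos unfolding var_jps_stat[OF g[OF that] g_unit[OF that]] A_def B_def
    by (simp add: algebra_simps sum_distrib_left sum_subtractf sum_divide_distrib)
  ultimately show ?thesis
    by (elim Lim_transform_eventually) (auto intro: eventually_sequentiallyI[of 1])
qed

end

theorem mainTheorem3:
  fixes H :: nat and Mr :: "nat \<Rightarrow> real measure" and P :: "real measure"
    and K :: "nat \<Rightarrow> real \<Rightarrow> real" and t :: real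
  assumes H2: "H \<ge> 2"
    and Mr_prob: "\<And>r. r \<in> {1..H} \<Longrightarrow> prob_space (Mr r)"
    and Mr_sets: "\<And>r. r \<in> {1..H} \<Longrightarrow> sets (Mr r) = sets borel"
    and P_prob: "prob_space P" and P_sets: "sets P = sets borel"
    and consistent: "\<And>s. measure P {..s} = (\<Sum>r = 1..H. measure (Mr r) {..s}) / real H"
    and K_cdf: "\<And>n. n \<ge> 1 \<Longrightarrow> is_CDF (K n)"
  defines "\<sigma>2 \<equiv> (\<lambda>n. var P (\<lambda>x. K n (t - x)))"
    and "\<Delta> \<equiv> (\<lambda>n. \<Sum>r = 1..H. ((\<integral>x. K n (t - x) \<partial>Mr r) - (\<integral>x. K n (t - x) \<partial>P))\<^sup>2)"
  shows "(\<forall>n\<ge>1. 0 \<le> \<Delta> n / real H \<and> \<Delta> n / real H \<le> \<sigma>2 n) \<and>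
         (\<lambda>n. real n * var (jps_sample H Mr n) (F_jps H n (K n) t) - (\<sigma>2 n - \<Delta> n / real H))
           \<longlonglongrightarrow> 0"
proof -
  interpret jps_design H Mr
    using H2 Mr_prob Mr_sets by (simp add: jps_design_def)
  note g = is_CDF_reflect_unit_interval[OF K_cdf]
  have total_var: "\<sigma>2 n - \<Delta> n / real H = (\<Sum>r = 1..H. var (Mr r) (\<lambda>x. K n (t - x))) / real H"
    if "n \<ge> 1" for n
    unfolding \<sigma>2_def \<Delta>_def population_eq_distr_snd[OF P_prob P_sets consistent]
    by (rule var_distr_snd_decomp[OF g[OF that]])
  have "0 \<le> \<Delta> n / real H \<and> \<Delta> n / real H \<le> \<sigma>2 n" if "n \<ge> 1" for n
  proof -
    have "0 \<le> \<Delta> n / real H" "0 \<le> (\<Sum>r = 1..H. var (Mr r) (\<lambda>x. K n (t - x))) / real H"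
      by (simp_all add: \<Delta>_def sum_nonneg var_nonneg)
    with total_var[OF that] show ?thesis by linarith
  qed
  moreover have "(\<lambda>n. real n * var (jps_sample H Mr n) (F_jps H n (K n) t) - (\<sigma>2 n - \<Delta> n / real H)) \<longlonglongrightarrow> 0"
    using var_jps_stat_asymptotics[OF g]
    by (rule Lim_transform_eventually)
      (auto intro!: eventually_sequentiallyI[of 1] simp: total_var F_jps_eq_jps_stat jps_sample_eq_sample)
  ultimately show ?thesis by blast
qed

end
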